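(* Let $c_1,c_2\in\mathbb{R}$ with $|c_1|+|c_2|=1$, $c_1c_2\neq0$ and $|c_1|\neq|c_2|$. Let $c_{2k-1}=c_1$, $c_{2k}=c_2$ for $k\in\mathbb{N}$, and let $J$ be the self-adjoint operator in $l^2(\mathbb{N})$ given by the Jacobi matrix with diagonal entries $q_n=n$ and off-diagonal entries $\lambda_n=c_nn$, i.e. $(Ju)_1=u_1+c_1u_2$, $(Ju)_n=\lambda_{n-1}u_{n-1}+nu_n+\lambda_nu_{n+1}$ for $n\ge2$, on its natural domain $\{u\in l^2(\mathbb{N}):Ju\in l^2(\mathbb{N})\}$. Then $\sigma(J)\cap(-\infty,\min\{|c_1|,|c_2|\})=\emptyset$, the spectrum of $J$ in $[\min\{|c_1|,|c_2|\},\frac12)$ is discrete, and for every $\varepsilon>0$ the eigenvalues $\lambda_n$ of $J$ satisfy $$\#\{\lambda_n:\ \lambda_n<\tfrac12-\varepsilon\}\le\frac1\varepsilon.$$ *)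

theory Defs
  imports "HOL-Analysis.Analysis"
begin

(* Sequences in l^2(N) are represented as functions nat => complex, 0-based:
   u i stands for u_{i+1} of the paper. *)

definition l2seq :: "(nat \<Rightarrow> complex) set" where
  "l2seq = {u. summable (\<lambda>n. (cmod (u n))^2)}"

(* periodic coefficient c_n (1-based n): c_{2k-1} = c1, c_{2k} = c2 *)
definition coef :: "real \<Rightarrow> real \<Rightarrow> nat \<Rightarrow> real" where
  "coef c1 c2 n = (if odd n then c1 else c2)"

definition offdiag :: "real \<Rightarrow> real \<Rightarrow> nat \<Rightarrow> real" where
  "offdiag c1 c2 n = coef c1 c2 n * real n"

(* the Jacobi difference expression, 0-based: index i corresponds to n = i+1
   (Ju)_n = lambda_{n-1} u_{n-1} + n u_n + lambda_n u_{n+1},  (Ju)_1 = u_1 + lambda_1 u_2 *)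
definition jac :: "real \<Rightarrow> real \<Rightarrow> (nat \<Rightarrow> complex) \<Rightarrow> nat \<Rightarrow> complex" where
  "jac c1 c2 u i =
     (if i = 0 then 0 else of_real (offdiag c1 c2 i) * u (i - 1))
     + of_real (real (i + 1)) * u i
     + of_real (offdiag c1 c2 (i + 1)) * u (i + 1)"

definition jac_dom :: "real \<Rightarrow> real \<Rightarrow> (nat \<Rightarrow> complex) set" where
  "jac_dom c1 c2 = {u \<in> l2seq. jac c1 c2 u \<in> l2seq}"

(* spectrum: z such that J - z is not a bijection from the domain onto l^2
   (J is closed, so bijectivity is equivalent to bounded invertibility) *)
definition jac_spectrum :: "real \<Rightarrow> real \<Rightarrow> complex set" where
  "jac_spectrum c1 c2 =
     {z. \<not> bij_betw (\<lambda>u n. jac c1 c2 u n - z * u n) (jac_dom c1 c2) l2seq}"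

definition jac_eigenspace :: "real \<Rightarrow> real \<Rightarrow> complex \<Rightarrow> (nat \<Rightarrow> complex) set" where
  "jac_eigenspace c1 c2 z = {u \<in> jac_dom c1 c2. jac c1 c2 u = (\<lambda>n. z * u n)}"

definition jac_eigenvalue :: "real \<Rightarrow> real \<Rightarrow> complex \<Rightarrow> bool" where
  "jac_eigenvalue c1 c2 z \<longleftrightarrow> (\<exists>u \<in> jac_eigenspace c1 c2 z. u \<noteq> (\<lambda>n. 0))"

definition fin_dim_seqs :: "(nat \<Rightarrow> complex) set \<Rightarrow> bool" where
  "fin_dim_seqs E \<longleftrightarrow>
     (\<exists>B. finite B \<and> (\<forall>u\<in>E. \<exists>c. u = (\<lambda>n. \<Sum>b\<in>B. c b * b n)))"

definition jac_disc_spectrum :: "real \<Rightarrow> real \<Rightarrow> complex set" where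
  "jac_disc_spectrum c1 c2 =
     {z \<in> jac_spectrum c1 c2. \<not> z islimpt jac_spectrum c1 c2 \<and>
        jac_eigenvalue c1 c2 z \<and> fin_dim_seqs (jac_eigenspace c1 c2 z)}"

end

theory Submission
  imports Defs "HOL-Library.Diagonal_Subsequence"
begin

text \<open>
  The main estimate is a lower bound for the quadratic form of \<open>J\<close>.  Writing the diagonal entry
  \<open>n\<close> as \<open>\<tau>\<^sub>n + \<alpha>\<^sub>n + \<beta>\<^sub>n\<close> with \<open>\<lambda>\<^sub>n\<^sup>2 \<le> \<alpha>\<^sub>n\<^sub>+\<^sub>1 \<beta>\<^sub>n\<close> makes every \<open>2 \<times> 2\<close> block coupling \<open>u\<^sub>n\<close> and \<open>u\<^sub>n\<^sub>+\<^sub>1\<close>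
  positive semidefinite, so that \<open>\<langle>Ju, u\<rangle> \<ge> \<Sum> \<tau>\<^sub>n \<bar>u\<^sub>n\<bar>\<^sup>2\<close>.  Because \<open>\<bar>c\<^sub>1\<bar> + \<bar>c\<^sub>2\<bar> = 1\<close>, the
  splitting can be chosen with \<open>1/2 - \<delta> \<le> \<tau>\<^sub>n \<le> 1/2\<close> and \<open>\<tau>\<^sub>n \<ge> 1/2 - 1/n\<close>, where
  \<open>1/2 - \<delta> = min \<bar>c\<^sub>1\<bar> \<bar>c\<^sub>2\<bar>\<close>.  Hence there are no eigenvalues below \<open>min \<bar>c\<^sub>1\<bar> \<bar>c\<^sub>2\<bar>\<close>, and
  eigenvectors of more than \<open>\<lfloor>1/\<epsilon>\<rfloor>\<close> eigenvalues below \<open>1/2 - \<epsilon>\<close> would span a vector vanishing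
  on the first \<open>\<lfloor>1/\<epsilon>\<rfloor>\<close> coordinates, where \<open>\<tau>\<^sub>n \<ge> 1/2 - \<epsilon>\<close>, with Rayleigh quotient below
  \<open>1/2 - \<epsilon>\<close>.

  For the spectrum, \<open>J - w\<close> is injective off the eigenvalues, and it is onto whenever the form of
  \<open>J - w\<close> is coercive on sequences supported in \<open>[K, \<infinity>)\<close>: finite sections are then uniformly
  solvable and a diagonal subsequence converges to a solution of the rows \<open>i \<ge> K\<close>.  For
  non-real \<open>w\<close> this holds with \<open>K = 0\<close>; for real \<open>x < 1/2\<close> it holds for large \<open>K\<close> by the
  bound on \<open>\<tau>\<^sub>n\<close>, and the three-term recursion, whose solutions are determined by two
  consecutive values, glues the tail solution to a global one unless \<open>x\<close> is an eigenvalue.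
\<close>

lemma psd_form_nonneg:
  fixes x y :: complex and a b c :: real
  assumes "a \<ge> 0" "b \<ge> 0" "c^2 \<le> a * b"
  shows "0 \<le> b * (cmod x)^2 + a * (cmod y)^2 + 2 * c * Re (y * cnj x)"
proof -
  define p q where "p = cmod x" and "q = cmod y"
  have pq: "p \<ge> 0" "q \<ge> 0" by (auto simp: p_def q_def)
  have "2 * \<bar>c\<bar> * (p * q) \<le> b * p^2 + a * q^2"
  proof (cases "b = 0")
    case True
    then show ?thesis using assms pq by simp
  next
    case False
    then have "b > 0" using assms by auto
    have "b * (b * p^2 + a * q^2 - 2 * \<bar>c\<bar> * (p * q)) = (b*p - \<bar>c\<bar>*q)^2 + (a*b - c^2) * q^2"
      by (simp add: power2_eq_square algebra_simps)
    also have "\<dots> \<ge> 0" using assms by (intro add_nonneg_nonneg) auto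
    finally show ?thesis using \<open>b > 0\<close> by (simp add: zero_le_mult_iff)
  qed
  moreover have "\<bar>2 * c * Re (y * cnj x)\<bar> \<le> 2 * \<bar>c\<bar> * (p * q)"
    using abs_Re_le_cmod[of "y * cnj x"]
    by (simp add: abs_mult p_def q_def norm_mult mult_left_mono mult.commute)
  ultimately have "0 \<le> b * p^2 + a * q^2 + 2 * c * Re (y * cnj x)" by linarith
  then show ?thesis by (simp add: p_def q_def)
qed

lemma mult_le_weighted_squares:
  fixes x y \<eta> :: real
  assumes "\<eta> > 0"
  shows "x * y \<le> x^2 / (2*\<eta>) + \<eta> * y^2 / 2"
proof -
  have "2 * \<eta> * (x * y) \<le> x^2 + \<eta>^2 * y^2"
    using zero_le_power2[of "x - \<eta> * y"] by (simp add: power2_eq_square algebra_simps)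
  then show ?thesis using assms by (simp add: field_simps power2_eq_square)
qed

section \<open>Square-summable sequences\<close>

lemma mem_l2seq_iff: "u \<in> l2seq \<longleftrightarrow> summable (\<lambda>n. (cmod (u n))^2)"
  by (simp add: l2seq_def)

lemma norm_mult_le_half_sum_squares: "cmod a * cmod b \<le> ((cmod a)^2 + (cmod b)^2) / 2"
  using sum_squares_bound[of "cmod a" "cmod b"] by (simp add: power2_eq_square)

lemma summable_norm_mult_l2seq:
  assumes "u \<in> l2seq" "v \<in> l2seq"
  shows "summable (\<lambda>n. cmod (u n) * cmod (v n))"
proof (rule summable_comparison_test')
  show "summable (\<lambda>n. ((cmod (u n))^2 + (cmod (v n))^2) / 2)"
    using assms by (intro summable_divide summable_add) (auto simp: mem_l2seq_iff)
  show "norm (cmod (u n) * cmod (v n)) \<le> ((cmod (u n))^2 + (cmod (v n))^2) / 2" for n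
    using norm_mult_le_half_sum_squares[of "u n" "v n"] by simp
qed

lemma summable_mult_cnj_l2seq:
  assumes "u \<in> l2seq" "v \<in> l2seq"
  shows "summable (\<lambda>n. u n * cnj (v n))"
  by (rule summable_comparison_test'[OF summable_norm_mult_l2seq[OF assms]]) (simp add: norm_mult)

lemma l2seq_zero: "(\<lambda>n. 0) \<in> l2seq"
  by (simp add: mem_l2seq_iff)

lemma l2seq_add:
  assumes "u \<in> l2seq" "v \<in> l2seq"
  shows "(\<lambda>n. u n + v n) \<in> l2seq"
  unfolding mem_l2seq_iff
proof (rule summable_comparison_test')
  show "summable (\<lambda>n. 2 * (cmod (u n))^2 + 2 * (cmod (v n))^2)"
    using assms by (intro summable_add summable_mult) (auto simp: mem_l2seq_iff)
  show "norm ((cmod (u n + v n))^2) \<le> 2 * (cmod (u n))^2 + 2 * (cmod (v n))^2" for n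
  proof -
    have "(cmod (u n + v n))^2 \<le> (cmod (u n) + cmod (v n))^2"
      by (intro power_mono norm_triangle_ineq) auto
    also have "\<dots> \<le> 2 * (cmod (u n))^2 + 2 * (cmod (v n))^2"
      using norm_mult_le_half_sum_squares[of "u n" "v n"] by (simp add: power2_eq_square algebra_simps)
    finally show ?thesis by simp
  qed
qed

lemma l2seq_cmult: "u \<in> l2seq \<Longrightarrow> (\<lambda>n. c * u n) \<in> l2seq"
  using summable_mult[of "\<lambda>n. (cmod (u n))^2" "(cmod c)^2"]
  by (simp add: mem_l2seq_iff norm_mult power_mult_distrib)

lemma l2seq_uminus: "u \<in> l2seq \<Longrightarrow> (\<lambda>n. - u n) \<in> l2seq"
  by (simp add: mem_l2seq_iff)

lemma l2seq_diff: "u \<in> l2seq \<Longrightarrow> v \<in> l2seq \<Longrightarrow> (\<lambda>n. u n - v n) \<in> l2seq"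
  using l2seq_add[of u "\<lambda>n. - v n"] l2seq_uminus[of v] by simp

lemma l2seq_sum:
  "finite F \<Longrightarrow> (\<And>x. x \<in> F \<Longrightarrow> f x \<in> l2seq) \<Longrightarrow> (\<lambda>n. \<Sum>x\<in>F. f x n) \<in> l2seq"
  by (induction F rule: finite_induct) (auto intro: l2seq_zero l2seq_add)

lemma l2seq_finite_support: "(\<And>n. n \<ge> M \<Longrightarrow> u n = 0) \<Longrightarrow> u \<in> l2seq"
  unfolding mem_l2seq_iff by (rule summable_finite[of "{..<M}"]) auto

lemma l2seq_shift: "u \<in> l2seq \<Longrightarrow> (\<lambda>n. u (Suc n)) \<in> l2seq"
  using summable_Suc_iff[of "\<lambda>n. (cmod (u n))^2"] by (simp add: mem_l2seq_iff)

lemma l2seq_eventually_eq: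
  assumes "v \<in> l2seq" "\<And>n. n \<ge> k \<Longrightarrow> u n = v n"
  shows "u \<in> l2seq"
proof -
  have "eventually (\<lambda>n. (cmod (u n))^2 = (cmod (v n))^2) sequentially"
    unfolding eventually_sequentially using assms(2) by (intro exI[of _ k]) auto
  then show ?thesis
    using assms(1) summable_cong by (fastforce simp: mem_l2seq_iff)
qed

lemma l2seq_suminf_pos: "u \<in> l2seq \<Longrightarrow> u \<noteq> (\<lambda>n. 0) \<Longrightarrow> (\<Sum>n. (cmod (u n))^2) > 0"
  unfolding mem_l2seq_iff
  using suminf_nonneg[of "\<lambda>n. (cmod (u n))^2"] suminf_eq_zero_iff[of "\<lambda>n. (cmod (u n))^2"]
  by (force simp: fun_eq_iff)

lemma l2seq_pointwise_limit:
  assumes lim: "\<And>n. (\<lambda>k. X k n) \<longlonglongrightarrow> u n"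
    and bound: "\<And>k P. (\<Sum>i<P. (cmod (X k i))^2) \<le> C"
  shows "u \<in> l2seq"
  unfolding mem_l2seq_iff
proof (rule summableI_nonneg_bounded)
  fix P
  have "(\<lambda>k. \<Sum>i<P. (cmod (X k i))^2) \<longlonglongrightarrow> (\<Sum>i<P. (cmod (u i))^2)"
    by (intro tendsto_intros lim)
  then show "(\<Sum>i<P. (cmod (u i))^2) \<le> C"
    by (rule LIMSEQ_le_const2) (use bound in auto)
qed auto

definition l2_inner :: "(nat \<Rightarrow> complex) \<Rightarrow> (nat \<Rightarrow> complex) \<Rightarrow> complex" where
  "l2_inner u v = (\<Sum>n. u n * cnj (v n))"

lemma l2_inner_cnj_commute:
  assumes "u \<in> l2seq" "v \<in> l2seq"
  shows "l2_inner u v = cnj (l2_inner v u)"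
proof -
  have "(\<lambda>n. cnj (v n * cnj (u n))) sums cnj (l2_inner v u)"
    unfolding l2_inner_def using summable_mult_cnj_l2seq[OF assms(2,1)]
    by (intro sums_cnj[THEN iffD2] summable_sums)
  then show ?thesis
    unfolding l2_inner_def by (simp add: mult.commute sums_iff)
qed

lemma l2_inner_self: "u \<in> l2seq \<Longrightarrow> l2_inner u u = of_real (\<Sum>n. (cmod (u n))^2)"
  unfolding l2_inner_def mem_l2seq_iff complex_norm_square[symmetric]
  by (simp add: suminf_of_real)

lemma l2_inner_cmult_left:
  "u \<in> l2seq \<Longrightarrow> v \<in> l2seq \<Longrightarrow> l2_inner (\<lambda>n. c * u n) v = c * l2_inner u v"
  unfolding l2_inner_def by (simp add: mult.assoc suminf_mult summable_mult_cnj_l2seq)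

lemma l2_inner_cmult_right:
  "u \<in> l2seq \<Longrightarrow> v \<in> l2seq \<Longrightarrow> l2_inner u (\<lambda>n. c * v n) = cnj c * l2_inner u v"
  unfolding l2_inner_def
  by (simp add: mult.left_commute suminf_mult summable_mult_cnj_l2seq)

lemma l2_inner_sum_sum:
  assumes fin: "finite F" and l2: "\<And>x. x \<in> F \<Longrightarrow> f x \<in> l2seq"
  shows "l2_inner (\<lambda>n. \<Sum>x\<in>F. a x * f x n) (\<lambda>n. \<Sum>y\<in>F. b y * f y n)
       = (\<Sum>x\<in>F. \<Sum>y\<in>F. a x * cnj (b y) * l2_inner (f x) (f y))"
proof -
  have "l2_inner (\<lambda>n. \<Sum>x\<in>F. a x * f x n) (\<lambda>n. \<Sum>y\<in>F. b y * f y n)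
      = (\<Sum>n. \<Sum>x\<in>F. \<Sum>y\<in>F. a x * cnj (b y) * (f x n * cnj (f y n)))"
    unfolding l2_inner_def by (simp add: sum_product ac_simps)
  also have "\<dots> = (\<Sum>x\<in>F. \<Sum>n. \<Sum>y\<in>F. a x * cnj (b y) * (f x n * cnj (f y n)))"
    by (rule suminf_sum) (intro summable_sum summable_mult summable_mult_cnj_l2seq l2, auto)
  also have "\<dots> = (\<Sum>x\<in>F. \<Sum>y\<in>F. \<Sum>n. a x * cnj (b y) * (f x n * cnj (f y n)))"
    by (rule sum.cong[OF refl], rule suminf_sum) (intro summable_mult summable_mult_cnj_l2seq l2, auto)
  also have "\<dots> = (\<Sum>x\<in>F. \<Sum>y\<in>F. a x * cnj (b y) * l2_inner (f x) (f y))"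
    unfolding l2_inner_def by (intro sum.cong refl suminf_mult summable_mult_cnj_l2seq l2)
  finally show ?thesis .
qed

lemma l2_inner_orthogonal_sum:
  assumes fin: "finite F" and l2: "\<And>x. x \<in> F \<Longrightarrow> f x \<in> l2seq"
    and orth: "\<And>x y. x \<in> F \<Longrightarrow> y \<in> F \<Longrightarrow> x \<noteq> y \<Longrightarrow> l2_inner (f x) (f y) = 0"
  shows "l2_inner (\<lambda>n. \<Sum>x\<in>F. a x * f x n) (\<lambda>n. \<Sum>y\<in>F. b y * f y n)
       = (\<Sum>x\<in>F. a x * cnj (b x) * l2_inner (f x) (f x))"
proof -
  have "(\<Sum>y\<in>F. a x * cnj (b y) * l2_inner (f x) (f y)) = a x * cnj (b x) * l2_inner (f x) (f x)"
    if x: "x \<in> F" for x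
  proof -
  have "(\<Sum>y\<in>F. a x * cnj (b y) * l2_inner (f x) (f y))
      = a x * cnj (b x) * l2_inner (f x) (f x) + (\<Sum>y\<in>F - {x}. a x * cnj (b y) * l2_inner (f x) (f y))"
    using fin x by (rule sum.remove)
  also have "(\<Sum>y\<in>F - {x}. a x * cnj (b y) * l2_inner (f x) (f y)) = 0"
    using orth x by (intro sum.neutral) auto
    finally show ?thesis by simp
  qed
  then show ?thesis
    by (simp add: l2_inner_sum_sum[OF fin l2])
qed

lemma summable_not_eventually_ge_harmonic:
  fixes g :: "nat \<Rightarrow> real"
  assumes "summable g" "\<delta> > 0"
  shows "\<not> eventually (\<lambda>n. \<delta> \<le> real (Suc n) * g n) sequentially"
proof
  assume "eventually (\<lambda>n. \<delta> \<le> real (Suc n) * g n) sequentially"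
  then have "eventually (\<lambda>n. norm (\<delta> * inverse (real (Suc n))) \<le> g n) sequentially"
  proof eventually_elim
    case (elim n)
    then have "\<delta> / real (Suc n) \<le> g n" by (simp add: pos_divide_le_eq mult.commute)
    then show ?case using assms(2) by (simp add: divide_inverse)
  qed
  then have "summable (\<lambda>n. \<delta> * inverse (real (Suc n)))"
    by (rule summable_comparison_test_ev[OF _ assms(1)])
  then have "summable (\<lambda>n. inverse (real (Suc n)))"
    using assms(2) summable_cmult_iff[of \<delta> "\<lambda>n. inverse (real (Suc n))"] by simp
  then show False
    using summable_Suc_iff[of "\<lambda>n. inverse (real n)"] not_summable_harmonic[where 'a=real] by simp
qed

text \<open>Used to pass inequalities between partial sums to the limit when they hold only up to a
  boundary term of size \<open>n \<cdot> g n\<close>, as produced by summation by parts.\<close>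

lemma tendsto_le_if_le_plus_harmonic:
  fixes a b g :: "nat \<Rightarrow> real"
  assumes "a \<longlonglongrightarrow> A" "b \<longlonglongrightarrow> B" "summable g" "\<And>n. b n \<le> a n + real (Suc n) * g n"
  shows "B \<le> A"
proof (rule ccontr)
  assume "\<not> B \<le> A"
  define \<gamma> where "\<gamma> = (B - A) / 3"
  have \<gamma>: "\<gamma> > 0" "3 * \<gamma> = B - A" using \<open>\<not> B \<le> A\<close> by (simp_all add: \<gamma>_def)
  have "eventually (\<lambda>n. a n < A + \<gamma>) sequentially" "eventually (\<lambda>n. B - \<gamma> < b n) sequentially"
    using assms(1,2) \<gamma>(1) by (auto intro: order_tendstoD)
  then have "eventually (\<lambda>n. \<gamma> \<le> real (Suc n) * g n) sequentially"
  proof eventually_elim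
    case (elim n)
    then show ?case using assms(4)[of n] \<gamma>(2) by linarith
  qed
  then show False using summable_not_eventually_ge_harmonic[OF assms(3) \<gamma>(1)] by blast
qed

lemma pointwise_bounded_convergent_subseq:
  fixes X :: "nat \<Rightarrow> nat \<Rightarrow> complex"
  assumes "\<And>k n. cmod (X k n) \<le> B n"
  obtains \<sigma> u where "strict_mono \<sigma>" "\<And>n. (\<lambda>k. X (\<sigma> k) n) \<longlonglongrightarrow> u n"
proof -
  interpret subseqs "\<lambda>n s. convergent (\<lambda>k. X (s k) n)"
  proof
    fix n and s :: "nat \<Rightarrow> nat"
    have "bounded (range (\<lambda>k. X (s k) n))"
      unfolding bounded_iff using assms by blast
    from bounded_imp_convergent_subsequence[OF this]
    obtain l r where "strict_mono r" "((\<lambda>k. X (s k) n) \<circ> r) \<longlonglongrightarrow> l"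
      by blast
    then show "\<exists>r'. strict_mono r' \<and> convergent (\<lambda>k. X ((s \<circ> r') k) n)"
      by (intro exI[of _ r]) (auto simp: convergent_def o_def)
  qed
  have "convergent (\<lambda>k. X (diagseq k) n)" for n
  proof -
    have "convergent (\<lambda>k. X ((diagseq \<circ> (+) (Suc n)) k) n)"
      by (rule diagseq_holds) (auto dest: convergent_subseq_convergent simp: o_def)
    then show ?thesis
      using convergent_ignore_initial_segment[of "\<lambda>k. X (diagseq k) n" "Suc n"]
      by (simp add: o_def add.commute)
  qed
  then show ?thesis
    by (intro that[OF subseq_diagseq]) (simp add: convergent_LIMSEQ_iff)
qed

section \<open>Finite linear systems\<close>

lemma sum_eliminate_unknown:
  fixes v :: "'i \<Rightarrow> 'e \<Rightarrow> 'a::field"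
  assumes "finite I" "j \<in> I"
  shows "(\<Sum>i\<in>I. (if i = j then - (\<Sum>k\<in>I - {j}. b k * v k c) / v j c else b i) * v i x)
       = (\<Sum>i\<in>I - {j}. b i * (v i x - v i c / v j c * v j x))"
proof -
  define S where "S = (\<Sum>k\<in>I - {j}. b k * v k c)"
  have "(\<Sum>i\<in>I - {j}. (if i = j then - S / v j c else b i) * v i x) = (\<Sum>i\<in>I - {j}. b i * v i x)"
    by (rule sum.cong) auto
  then have "(\<Sum>i\<in>I. (if i = j then - S / v j c else b i) * v i x)
      = - S / v j c * v j x + (\<Sum>i\<in>I - {j}. b i * v i x)"
    using assms by (simp add: sum.remove)
  also have "\<dots> = (\<Sum>i\<in>I - {j}. b i * v i x) - S * (v j x / v j c)"
    by simp
  also have "\<dots> = (\<Sum>i\<in>I - {j}. b i * v i x - b i * v i c * (v j x / v j c))"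
    unfolding S_def by (simp add: sum_subtractf sum_distrib_right sum_divide_distrib)
  also have "\<dots> = (\<Sum>i\<in>I - {j}. b i * (v i x - v i c / v j c * v j x))"
    by (rule sum.cong) (simp_all add: right_diff_distrib)
  finally show ?thesis unfolding S_def .
qed

lemma homogeneous_system_nontrivial_solution:
  fixes v :: "'i \<Rightarrow> 'e \<Rightarrow> 'a::field"
  assumes "finite C"
  shows "finite I \<Longrightarrow> card C < card I \<Longrightarrow> \<exists>b. (\<exists>i\<in>I. b i \<noteq> 0) \<and> (\<forall>c\<in>C. (\<Sum>i\<in>I. b i * v i c) = 0)"
  using assms
proof (induction C arbitrary: I v rule: finite_induct)
  case empty
  then have "I \<noteq> {}" by auto
  then show ?case by (intro exI[of _ "\<lambda>_. 1"]) auto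
next
  case (insert c C)
  show ?case
  proof (cases "\<forall>i\<in>I. v i c = 0")
    case True
    have "card C < card I" using insert by simp
    then obtain b where "\<exists>i\<in>I. b i \<noteq> 0" "\<forall>x\<in>C. (\<Sum>i\<in>I. b i * v i x) = 0"
      using insert.IH[OF insert.prems(1)] by blast
    then show ?thesis using True by (intro exI[of _ b]) auto
  next
    case False
    text \<open>Gaussian elimination: use the unknown \<open>j\<close> to clear the equation \<open>c\<close>.\<close>
    then obtain j where j: "j \<in> I" "v j c \<noteq> 0" by auto
    have "finite (I - {j})" "card C < card (I - {j})"
      using insert.prems insert.hyps j by (simp_all add: card_Diff_singleton)
    then obtain b' where b': "\<exists>i\<in>I - {j}. b' i \<noteq> 0"
      "\<forall>x\<in>C. (\<Sum>i\<in>I - {j}. b' i * (v i x - v i c / v j c * v j x)) = 0"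
      using insert.IH[of "I - {j}" "\<lambda>i x. v i x - v i c / v j c * v j x"] by blast
    define b where "b i = (if i = j then - (\<Sum>k\<in>I - {j}. b' k * v k c) / v j c else b' i)" for i
    have eq: "(\<Sum>i\<in>I. b i * v i x) = (\<Sum>i\<in>I - {j}. b' i * (v i x - v i c / v j c * v j x))" for x
      unfolding b_def using insert.prems(1) j(1) by (rule sum_eliminate_unknown)
    show ?thesis
    proof (intro exI[of _ b] conjI)
      show "\<exists>i\<in>I. b i \<noteq> 0" using b'(1) by (auto simp: b_def)
      show "\<forall>x\<in>insert c C. (\<Sum>i\<in>I. b i * v i x) = 0"
        using b'(2) j(2) by (simp add: eq)
    qed
  qed
qed

definition unit_seq :: "nat \<Rightarrow> nat \<Rightarrow> 'a::zero_neq_one" where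
  "unit_seq j n = (if n = j then 1 else 0)"

lemma sum_unit_seq_outside:
  fixes \<beta> :: "nat \<Rightarrow> 'a::semiring_1"
  shows "n \<notin> I \<Longrightarrow> (\<Sum>j\<in>I. \<beta> j * unit_seq j n) = 0"
  by (intro sum.neutral) (auto simp: unit_seq_def)

lemma sum_unit_seq_inside:
  fixes \<beta> :: "nat \<Rightarrow> 'a::semiring_1"
  shows "finite I \<Longrightarrow> n \<in> I \<Longrightarrow> (\<Sum>j\<in>I. \<beta> j * unit_seq j n) = \<beta> n"
  by (simp add: unit_seq_def if_distrib sum.delta' cong: if_cong)

lemma square_system_columns_independent:
  fixes L :: "(nat \<Rightarrow> 'a::field) \<Rightarrow> nat \<Rightarrow> 'a"
  assumes fin: "finite I"
    and lin: "\<And>\<beta> i. i \<in> I \<Longrightarrow> L (\<lambda>n. \<Sum>j\<in>I. \<beta> j * unit_seq j n) i = (\<Sum>j\<in>I. \<beta> j * L (unit_seq j) i)"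
    and inj: "\<And>v. (\<And>n. n \<notin> I \<Longrightarrow> v n = 0) \<Longrightarrow> (\<And>i. i \<in> I \<Longrightarrow> L v i = 0) \<Longrightarrow> (\<And>n. v n = 0)"
    and zero: "\<And>i. i \<in> I \<Longrightarrow> (\<Sum>j\<in>I. \<beta> j * L (unit_seq j) i) = 0"
    and "j \<in> I"
  shows "\<beta> j = 0"
proof -
  define w where "w = (\<lambda>n. \<Sum>j\<in>I. \<beta> j * unit_seq j n)"
  have "w n = 0" for n
  proof (rule inj)
    show "w n = 0" if "n \<notin> I" for n using that by (simp add: w_def sum_unit_seq_outside)
    show "L w i = 0" if "i \<in> I" for i using zero[OF that] lin[OF that] by (simp add: w_def)
  qed
  then show ?thesis using sum_unit_seq_inside[OF fin \<open>j \<in> I\<close>, of \<beta>] by (simp add: w_def)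
qed

lemma square_system_solvable_if_injective:
  fixes L :: "(nat \<Rightarrow> 'a::field) \<Rightarrow> nat \<Rightarrow> 'a"
  assumes fin: "finite I"
    and lin: "\<And>\<beta> i. i \<in> I \<Longrightarrow> L (\<lambda>n. \<Sum>j\<in>I. \<beta> j * unit_seq j n) i = (\<Sum>j\<in>I. \<beta> j * L (unit_seq j) i)"
    and inj: "\<And>v. (\<And>n. n \<notin> I \<Longrightarrow> v n = 0) \<Longrightarrow> (\<And>i. i \<in> I \<Longrightarrow> L v i = 0) \<Longrightarrow> (\<And>n. v n = 0)"
  shows "\<exists>v. (\<forall>n. n \<notin> I \<longrightarrow> v n = 0) \<and> (\<forall>i\<in>I. L v i = f i)"
proof -
  define V where "V x = (case x of None \<Rightarrow> f | Some j \<Rightarrow> L (unit_seq j))" for x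
  define K where "K = insert None (Some ` I)"
  have "finite K" "card I < card K" using fin by (simp_all add: K_def card_image)
  then obtain b where b: "\<exists>x\<in>K. b x \<noteq> 0" "\<forall>i\<in>I. (\<Sum>x\<in>K. b x * V x i) = 0"
    using homogeneous_system_nontrivial_solution[OF fin, of K V] by blast
  have sumK: "(\<Sum>x\<in>K. b x * V x i) = b None * f i + (\<Sum>j\<in>I. b (Some j) * L (unit_seq j) i)" for i
    unfolding K_def using fin by (simp add: V_def sum.reindex)
  have "b None \<noteq> 0"
  proof
    assume "b None = 0"
    have "b (Some j) = 0" if "j \<in> I" for j
    proof (rule square_system_columns_independent)
      show "(\<Sum>j\<in>I. b (Some j) * L (unit_seq j) i) = 0" if "i \<in> I" for i
        using b(2) sumK[of i] that \<open>b None = 0\<close> by simp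
    qed (use fin lin inj that in auto)
    then show False using b(1) \<open>b None = 0\<close> by (auto simp: K_def)
  qed
  define w where "w = (\<lambda>n. \<Sum>j\<in>I. (- b (Some j) / b None) * unit_seq j n)"
  have "L w i = f i" if i: "i \<in> I" for i
  proof -
    have "L w i = - (\<Sum>j\<in>I. b (Some j) * L (unit_seq j) i) / b None"
      unfolding w_def lin[OF i] by (simp add: sum_divide_distrib sum_negf)
    also have "(\<Sum>j\<in>I. b (Some j) * L (unit_seq j) i) = - (b None * f i)"
      using b(2) i sumK[of i] by (simp add: add_eq_0_iff)
    finally show ?thesis using \<open>b None \<noteq> 0\<close> by simp
  qed
  moreover have "w n = 0" if "n \<notin> I" for n
    unfolding w_def by (rule sum_unit_seq_outside[OF that])
  ultimately show ?thesis by blast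
qed

section \<open>The Jacobi operator\<close>

locale jacobi =
  fixes c1 c2 :: real
  assumes coefs_nonzero: "c1 * c2 \<noteq> 0"
begin

abbreviation J :: "(nat \<Rightarrow> complex) \<Rightarrow> nat \<Rightarrow> complex" where
  "J \<equiv> jac c1 c2"

abbreviation Dom :: "(nat \<Rightarrow> complex) set" where
  "Dom \<equiv> jac_dom c1 c2"

definition Jshift :: "complex \<Rightarrow> (nat \<Rightarrow> complex) \<Rightarrow> nat \<Rightarrow> complex" where
  "Jshift w u n = J u n - w * u n"

text \<open>\<open>lam i\<close> is the paper's \<open>\<lambda>\<^sub>i\<^sub>+\<^sub>1\<close>, the entry coupling the coordinates \<open>i\<close> and \<open>i + 1\<close>.\<close>

definition lam :: "nat \<Rightarrow> real" where
  "lam i = offdiag c1 c2 (Suc i)"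

lemma jac_0: "J u 0 = u 0 + of_real (lam 0) * u (Suc 0)"
  by (simp add: jac_def lam_def)

lemma jac_Suc:
  "J u (Suc i) = of_real (lam i) * u i + of_nat (Suc (Suc i)) * u (Suc i) + of_real (lam (Suc i)) * u (Suc (Suc i))"
  by (simp add: jac_def lam_def)

lemma lam_nonzero: "lam i \<noteq> 0"
  using coefs_nonzero by (auto simp: lam_def offdiag_def coef_def)

lemma abs_lam_le: "\<bar>lam i\<bar> \<le> (\<bar>c1\<bar> + \<bar>c2\<bar>) * real (Suc i)"
proof -
  have "\<bar>coef c1 c2 (Suc i)\<bar> \<le> \<bar>c1\<bar> + \<bar>c2\<bar>" by (simp add: coef_def)
  then show ?thesis by (simp add: lam_def offdiag_def abs_mult mult_right_mono)
qed

lemma Jshift_fun: "Jshift w = (\<lambda>u n. J u n - w * u n)"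
  by (simp add: fun_eq_iff Jshift_def)

lemma Jshift_0: "Jshift w u 0 = (1 - w) * u 0 + of_real (lam 0) * u (Suc 0)"
  by (simp add: Jshift_def jac_0 algebra_simps)

lemma Jshift_Suc:
  "Jshift w u (Suc i) = of_real (lam i) * u i + (of_nat (Suc (Suc i)) - w) * u (Suc i)
     + of_real (lam (Suc i)) * u (Suc (Suc i))"
  by (simp add: Jshift_def jac_Suc algebra_simps)

lemma jac_sum: "J (\<lambda>n. \<Sum>j\<in>I. \<beta> j * g j n) i = (\<Sum>j\<in>I. \<beta> j * J (g j) i)"
  by (cases i) (simp_all add: jac_def sum_distrib_left sum.distrib algebra_simps)

lemma Jshift_sum: "Jshift w (\<lambda>n. \<Sum>j\<in>I. \<beta> j * g j n) i = (\<Sum>j\<in>I. \<beta> j * Jshift w (g j) i)"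
  by (simp add: Jshift_def jac_sum sum_distrib_left sum_subtractf algebra_simps)

lemma Jshift_add [simp]: "Jshift w (\<lambda>n. u n + v n) i = Jshift w u i + Jshift w v i"
  and Jshift_diff [simp]: "Jshift w (\<lambda>n. u n - v n) i = Jshift w u i - Jshift w v i"
  and Jshift_cmult [simp]: "Jshift w (\<lambda>n. c * u n) i = c * Jshift w u i"
  by (simp_all add: Jshift_def jac_def algebra_simps)

lemma Jshift_tendsto:
  assumes "\<And>n. (\<lambda>k. X k n) \<longlonglongrightarrow> u n"
  shows "(\<lambda>k. Jshift w (X k) i) \<longlonglongrightarrow> Jshift w u i"
  by (cases i) (simp_all add: Jshift_0 Jshift_Suc tendsto_intros assms)

lemma jac_green:
  "(\<Sum>i<Suc N. J u i * cnj (v i) - u i * cnj (J v i))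
   = of_real (lam N) * (u (Suc N) * cnj (v N) - u N * cnj (v (Suc N)))"
  by (induction N) (simp_all add: jac_0 jac_Suc algebra_simps)

lemma jac_symmetric:
  assumes u: "u \<in> Dom" and v: "v \<in> Dom"
  shows "l2_inner (J u) v = l2_inner u (J v)"
proof -
  define D where "D = l2_inner (J u) v - l2_inner u (J v)"
  have "(\<lambda>n. J u n * cnj (v n) - u n * cnj (J v n)) sums D"
    unfolding D_def l2_inner_def using u v
    by (intro sums_diff summable_sums summable_mult_cnj_l2seq) (auto simp: jac_dom_def)
  then have lim: "(\<lambda>N. norm (\<Sum>i<Suc N. J u i * cnj (v i) - u i * cnj (J v i))) \<longlonglongrightarrow> norm D"
    unfolding sums_def by (intro tendsto_norm LIMSEQ_Suc)
  define g where "g N = (\<bar>c1\<bar> + \<bar>c2\<bar>) * (cmod (u (Suc N)) * cmod (v N) + cmod (u N) * cmod (v (Suc N)))" for N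
  have "summable g"
    unfolding g_def using u v
    by (intro summable_mult summable_add summable_norm_mult_l2seq l2seq_shift) (auto simp: jac_dom_def)
  moreover have "norm (\<Sum>i<Suc N. J u i * cnj (v i) - u i * cnj (J v i)) \<le> 0 + real (Suc N) * g N" for N
  proof -
    have "cmod (u (Suc N) * cnj (v N) - u N * cnj (v (Suc N)))
        \<le> cmod (u (Suc N)) * cmod (v N) + cmod (u N) * cmod (v (Suc N))"
      using norm_triangle_ineq4[of "u (Suc N) * cnj (v N)" "u N * cnj (v (Suc N))"] by (simp add: norm_mult)
    then have "\<bar>lam N\<bar> * cmod (u (Suc N) * cnj (v N) - u N * cnj (v (Suc N)))
        \<le> ((\<bar>c1\<bar> + \<bar>c2\<bar>) * real (Suc N)) * (cmod (u (Suc N)) * cmod (v N) + cmod (u N) * cmod (v (Suc N)))"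
      using abs_lam_le[of N] by (intro mult_mono) auto
    then show ?thesis
      unfolding jac_green norm_mult norm_of_real g_def by (simp add: mult_ac)
  qed
  ultimately have "norm D \<le> 0"
    by (intro tendsto_le_if_le_plus_harmonic[OF tendsto_const lim])
  then show ?thesis by (simp add: D_def)
qed

lemma Im_l2_inner_jac_self:
  assumes "u \<in> Dom"
  shows "Im (l2_inner (J u) u) = 0"
proof -
  have "l2_inner (J u) u = cnj (l2_inner (J u) u)"
    using jac_symmetric[OF assms assms] assms
    by (simp add: l2_inner_cnj_commute[of u "J u"] jac_dom_def)
  then show ?thesis by (metis cnj.sel(2) equal_neg_zero)
qed

lemma jac_eigenvalue_iff:
  "jac_eigenvalue c1 c2 w \<longleftrightarrow> (\<exists>u\<in>Dom. J u = (\<lambda>n. w * u n) \<and> u \<noteq> (\<lambda>n. 0))"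
  by (auto simp: jac_eigenvalue_def jac_eigenspace_def)

lemma l2_inner_eigenvector:
  "u \<in> l2seq \<Longrightarrow> J u = (\<lambda>n. w * u n) \<Longrightarrow> l2_inner (J u) u = w * of_real (\<Sum>n. (cmod (u n))^2)"
  by (simp add: l2_inner_cmult_left l2_inner_self)

lemma jac_eigenvalue_real:
  assumes "jac_eigenvalue c1 c2 w"
  shows "Im w = 0"
proof -
  obtain u where u: "u \<in> Dom" "J u = (\<lambda>n. w * u n)" "u \<noteq> (\<lambda>n. 0)"
    using assms by (auto simp: jac_eigenvalue_iff)
  then have "u \<in> l2seq" by (simp add: jac_dom_def)
  then have "Im w * (\<Sum>n. (cmod (u n))^2) = 0"
    using Im_l2_inner_jac_self[OF u(1)] l2_inner_eigenvector[OF _ u(2)] by simp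
  then show ?thesis using l2seq_suminf_pos[OF \<open>u \<in> l2seq\<close> u(3)] by simp
qed

lemma eigenvectors_orthogonal:
  fixes x y :: real
  assumes "u \<in> Dom" "v \<in> Dom" "J u = (\<lambda>n. of_real x * u n)" "J v = (\<lambda>n. of_real y * v n)" "x \<noteq> y"
  shows "l2_inner u v = 0"
proof -
  have "u \<in> l2seq" "v \<in> l2seq" using assms(1,2) by (auto simp: jac_dom_def)
  then have "of_real x * l2_inner u v = of_real y * l2_inner u v"
    using jac_symmetric[OF assms(1,2)] assms(3,4) by (simp add: l2_inner_cmult_left l2_inner_cmult_right)
  then show ?thesis using assms(5) by simp
qed

lemma eigenvector_combination:
  fixes e :: "real \<Rightarrow> nat \<Rightarrow> complex" and b :: "real \<Rightarrow> complex"
  assumes F: "finite F"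
    and e: "\<And>x. x \<in> F \<Longrightarrow> e x \<in> Dom" "\<And>x. x \<in> F \<Longrightarrow> J (e x) = (\<lambda>n. of_real x * e x n)"
  defines "u \<equiv> \<lambda>n. \<Sum>x\<in>F. b x * e x n"
  shows "u \<in> Dom"
    and "Re (l2_inner (J u) u) = (\<Sum>x\<in>F. x * (cmod (b x))^2 * (\<Sum>n. (cmod (e x n))^2))"
    and "(\<Sum>n. (cmod (u n))^2) = (\<Sum>x\<in>F. (cmod (b x))^2 * (\<Sum>n. (cmod (e x n))^2))"
proof -
  have el: "e x \<in> l2seq" if "x \<in> F" for x using e(1)[OF that] by (simp add: jac_dom_def)
  have orth: "l2_inner (e x) (e y) = 0" if "x \<in> F" "y \<in> F" "x \<noteq> y" for x y
    using eigenvectors_orthogonal[OF e(1)[OF that(1)] e(1)[OF that(2)] e(2)[OF that(1)] e(2)[OF that(2)] that(3)] .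
  have self: "l2_inner (e x) (e x) = of_real (\<Sum>n. (cmod (e x n))^2)" if "x \<in> F" for x
    by (rule l2_inner_self[OF el[OF that]])
  have Ju: "J u = (\<lambda>n. \<Sum>x\<in>F. (b x * of_real x) * e x n)"
    unfolding u_def by (simp add: fun_eq_iff jac_sum e(2) mult.assoc cong: sum.cong)
  have "u \<in> l2seq" unfolding u_def using F el by (auto intro!: l2seq_sum l2seq_cmult)
  moreover have "J u \<in> l2seq" unfolding Ju using F el by (auto intro!: l2seq_sum l2seq_cmult)
  ultimately show "u \<in> Dom" by (simp add: jac_dom_def)
  have "l2_inner (J u) u = (\<Sum>x\<in>F. b x * of_real x * cnj (b x) * l2_inner (e x) (e x))"
    unfolding Ju unfolding u_def by (rule l2_inner_orthogonal_sum[OF F el orth])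
  also have "\<dots> = of_real (\<Sum>x\<in>F. x * (cmod (b x))^2 * (\<Sum>n. (cmod (e x n))^2))"
    unfolding of_real_sum by (intro sum.cong refl) (simp add: self mult_ac flip: complex_norm_square)
  finally show "Re (l2_inner (J u) u) = (\<Sum>x\<in>F. x * (cmod (b x))^2 * (\<Sum>n. (cmod (e x n))^2))"
    by simp
  have "of_real (\<Sum>n. (cmod (u n))^2) = l2_inner u u"
    using \<open>u \<in> l2seq\<close> by (simp add: l2_inner_self)
  also have "\<dots> = (\<Sum>x\<in>F. b x * cnj (b x) * l2_inner (e x) (e x))"
    unfolding u_def by (rule l2_inner_orthogonal_sum[OF F el orth])
  also have "\<dots> = of_real (\<Sum>x\<in>F. (cmod (b x))^2 * (\<Sum>n. (cmod (e x n))^2))"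
    unfolding of_real_sum by (intro sum.cong refl) (simp add: self flip: complex_norm_square)
  finally show "(\<Sum>n. (cmod (u n))^2) = (\<Sum>x\<in>F. (cmod (b x))^2 * (\<Sum>n. (cmod (e x n))^2))"
    by (simp only: of_real_eq_iff)
qed

text \<open>Since \<open>lam i \<noteq> 0\<close>, row \<open>i\<close> of \<open>(J - w) y = h\<close> determines \<open>y (i + 1)\<close> from \<open>y i\<close> and
  \<open>y (i - 1)\<close>; \<open>forward_pair\<close> carries the last two values.\<close>

primrec forward_pair :: "complex \<Rightarrow> (nat \<Rightarrow> complex) \<Rightarrow> complex \<Rightarrow> nat \<Rightarrow> complex \<times> complex" where
  "forward_pair w h y0 0 = (y0, (h 0 - (1 - w) * y0) / of_real (lam 0))"
| "forward_pair w h y0 (Suc n) = (snd (forward_pair w h y0 n),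
     (h (Suc n) - of_real (lam n) * fst (forward_pair w h y0 n)
        - (of_nat (Suc (Suc n)) - w) * snd (forward_pair w h y0 n)) / of_real (lam (Suc n)))"

lemma Jshift_forward_solution: "\<exists>y. y 0 = y0 \<and> (\<forall>i. Jshift w y i = h i)"
proof -
  define y where "y n = fst (forward_pair w h y0 n)" for n
  have y_Suc: "y (Suc n) = snd (forward_pair w h y0 n)" for n by (simp add: y_def)
  have "Jshift w y i = h i" for i
    using lam_nonzero by (cases i) (simp_all add: Jshift_0 Jshift_Suc y_Suc, simp_all add: y_def)
  then show ?thesis by (intro exI[of _ y]) (simp add: y_def)
qed

lemma Jshift_zero_propagates:
  assumes rows: "\<And>i. i \<ge> Suc k \<Longrightarrow> Jshift w y i = 0"
    and "y k = 0" "y (Suc k) = 0" "n \<ge> k"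
  shows "y n = 0"
proof -
  have "y (k + j) = 0 \<and> y (k + Suc j) = 0" for j
  proof (induction j)
    case 0 then show ?case using assms(2,3) by simp
  next
    case (Suc j)
    then have "of_real (lam (Suc (k + j))) * y (k + Suc (Suc j)) = 0"
      using rows[of "k + Suc j"] by (simp add: Jshift_Suc)
    then show ?case using Suc.IH lam_nonzero by simp
  qed
  then show ?thesis using \<open>n \<ge> k\<close> by (metis le_Suc_ex)
qed

lemma Jshift_zero_unique:
  assumes "\<And>i. Jshift w y i = 0" "y 0 = 0"
  shows "y n = 0"
proof -
  have "y (Suc 0) = 0" using assms(1)[of 0] assms(2) lam_nonzero[of 0] by (simp add: Jshift_0)
  show ?thesis by (rule Jshift_zero_propagates[where k=0]) (use assms \<open>y (Suc 0) = 0\<close> in auto)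
qed

lemma jac_eigenspace_fin_dim: "fin_dim_seqs (jac_eigenspace c1 c2 w)"
proof -
  obtain \<phi> where \<phi>: "\<phi> 0 = 1" "\<And>i. Jshift w \<phi> i = 0"
    using Jshift_forward_solution[of 1 w "\<lambda>_. 0"] by auto
  have multiple: "\<exists>c. u = (\<lambda>n. c * \<phi> n)" if "u \<in> jac_eigenspace c1 c2 w" for u
  proof
    have Ju: "Jshift w u i = 0" for i
      using that by (simp add: jac_eigenspace_def Jshift_def)
    have diff: "u n - u 0 * \<phi> n = 0" for n
      by (rule Jshift_zero_unique[of w "\<lambda>n. u n - u 0 * \<phi> n"]) (simp_all add: \<phi> Ju)
    show "u = (\<lambda>n. u 0 * \<phi> n)" by (rule ext) (rule right_minus_eq[THEN iffD1, OF diff])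
  qed
  show ?thesis
    unfolding fin_dim_seqs_def
  proof (intro exI[of _ "{\<phi>}"] conjI ballI)
    fix u assume "u \<in> jac_eigenspace c1 c2 w"
    then obtain c where "u = (\<lambda>n. c * \<phi> n)" using multiple by blast
    then show "\<exists>c. u = (\<lambda>n. \<Sum>b\<in>{\<phi>}. c b * b n)" by (intro exI[of _ "\<lambda>_. c"]) simp
  qed simp
qed

lemma jac_spectrum_iff: "w \<in> jac_spectrum c1 c2 \<longleftrightarrow> \<not> bij_betw (Jshift w) Dom l2seq"
  by (simp add: jac_spectrum_def Jshift_fun)

lemma bij_Jshift_if_surj:
  assumes "\<not> jac_eigenvalue c1 c2 w"
    and surj: "\<And>f. f \<in> l2seq \<Longrightarrow> \<exists>u\<in>l2seq. \<forall>i. Jshift w u i = f i"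
  shows "bij_betw (Jshift w) Dom l2seq"
proof (rule bij_betwI')
  fix u v assume u: "u \<in> Dom" and v: "v \<in> Dom"
  show "(Jshift w u = Jshift w v) = (u = v)"
  proof
    assume eq: "Jshift w u = Jshift w v"
    define d where "d = (\<lambda>n. u n - v n)"
    have "Jshift w d i = 0" for i
      using fun_cong[OF eq, of i] by (simp add: d_def)
    then have Jd: "J d = (\<lambda>n. w * d n)" by (simp add: fun_eq_iff Jshift_def)
    moreover have "d \<in> l2seq" "J d \<in> l2seq"
      using u v unfolding Jd by (auto simp: d_def jac_dom_def intro: l2seq_diff l2seq_cmult)
    ultimately show "u = v"
      using assms(1) by (auto simp: jac_eigenvalue_iff jac_dom_def d_def fun_eq_iff)
  qed simp
next
  fix u assume "u \<in> Dom"
  then show "Jshift w u \<in> l2seq"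
    unfolding jac_dom_def Jshift_fun by (auto intro: l2seq_diff l2seq_cmult)
next
  fix f assume f: "f \<in> l2seq"
  obtain u where u: "u \<in> l2seq" "\<And>i. Jshift w u i = f i" using surj[OF f] by blast
  have "J u = (\<lambda>n. f n + w * u n)" using u(2) by (auto simp: fun_eq_iff Jshift_def algebra_simps)
  then have "u \<in> Dom" using u f unfolding jac_dom_def by (auto intro: l2seq_add l2seq_cmult)
  moreover have "f = Jshift w u" using u(2) by auto
  ultimately show "\<exists>u\<in>Dom. f = Jshift w u" by blast
qed


subsection \<open>Solvability by finite sections\<close>

definition section_coercive :: "nat \<Rightarrow> complex \<Rightarrow> real \<Rightarrow> bool" where
  "section_coercive K w \<eta> \<longleftrightarrow> (\<forall>v M. (\<forall>n. n < K \<or> M \<le> n \<longrightarrow> v n = 0) \<longrightarrow>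
      \<eta> * (\<Sum>i<M. (cmod (v i))^2) \<le> cmod (\<Sum>i<M. Jshift w v i * cnj (v i)))"

definition tail_solvable :: "nat \<Rightarrow> complex \<Rightarrow> bool" where
  "tail_solvable K w \<longleftrightarrow>
     (\<forall>f\<in>l2seq. \<exists>u\<in>l2seq. (\<forall>n<K. u n = 0) \<and> (\<forall>i\<ge>K. Jshift w u i = f i))"

lemma section_coerciveD:
  "section_coercive K w \<eta> \<Longrightarrow> (\<And>n. n < K \<or> M \<le> n \<Longrightarrow> v n = 0) \<Longrightarrow>
     \<eta> * (\<Sum>i<M. (cmod (v i))^2) \<le> cmod (\<Sum>i<M. Jshift w v i * cnj (v i))"
  unfolding section_coercive_def by blast

lemma finite_section_solvable:
  assumes "\<eta> > 0" "section_coercive K w \<eta>"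
  shows "\<exists>v. (\<forall>n. n \<notin> {K..<M} \<longrightarrow> v n = 0) \<and> (\<forall>i\<in>{K..<M}. Jshift w v i = f i)"
proof (rule square_system_solvable_if_injective)
  show "Jshift w (\<lambda>n. \<Sum>j\<in>{K..<M}. \<beta> j * unit_seq j n) i = (\<Sum>j\<in>{K..<M}. \<beta> j * Jshift w (unit_seq j) i)"
    for \<beta> i by (rule Jshift_sum)
  fix v n
  assume supp: "\<And>n. n \<notin> {K..<M} \<Longrightarrow> v n = 0" and rows: "\<And>i. i \<in> {K..<M} \<Longrightarrow> Jshift w v i = 0"
  have "Jshift w v i * cnj (v i) = 0" for i
    using supp[of i] rows[of i] by (cases "i \<in> {K..<M}") auto
  then have "(\<Sum>i<M. Jshift w v i * cnj (v i)) = 0" by (intro sum.neutral ballI)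
  moreover have "\<eta> * (\<Sum>i<M. (cmod (v i))^2) \<le> cmod (\<Sum>i<M. Jshift w v i * cnj (v i))"
    by (rule section_coerciveD[OF assms(2)]) (use supp in auto)
  ultimately have "\<eta> * (\<Sum>i<M. (cmod (v i))^2) \<le> 0" by simp
  then have "(\<Sum>i<M. (cmod (v i))^2) = 0"
    using assms(1) sum_nonneg[of "{..<M}" "\<lambda>i. (cmod (v i))^2"] by (simp add: mult_le_0_iff)
  then show "v n = 0"
    using supp[of n] by (cases "n < M") (auto simp: sum_nonneg_eq_0_iff)
qed simp

text \<open>Testing the equation against \<open>v\<close> gives
  \<open>\<eta> \<parallel>v\<parallel>\<^sup>2 \<le> \<bar>\<langle>f, v\<rangle>\<bar> \<le> \<parallel>f\<parallel>\<^sup>2 / (2\<eta>) + \<eta> \<parallel>v\<parallel>\<^sup>2 / 2\<close>.\<close>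

lemma finite_section_bound:
  assumes \<eta>: "\<eta> > 0" and coercive: "section_coercive K w \<eta>" and f: "f \<in> l2seq"
    and supp: "\<And>n. n \<notin> {K..<M} \<Longrightarrow> v n = 0" and rows: "\<And>i. i \<in> {K..<M} \<Longrightarrow> Jshift w v i = f i"
  shows "(\<Sum>i<M. (cmod (v i))^2) \<le> (\<Sum>n. (cmod (f n))^2) / \<eta>^2"
proof -
  define S where "S = (\<Sum>i<M. (cmod (v i))^2)"
  have "Jshift w v i * cnj (v i) = f i * cnj (v i)" if "i < M" for i
    using that supp[of i] rows[of i] by (cases "i < K") auto
  then have "(\<Sum>i<M. Jshift w v i * cnj (v i)) = (\<Sum>i<M. f i * cnj (v i))"
    by (intro sum.cong) auto
  moreover have "\<eta> * S \<le> cmod (\<Sum>i<M. Jshift w v i * cnj (v i))"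
    unfolding S_def by (rule section_coerciveD[OF coercive]) (use supp in auto)
  ultimately have "\<eta> * S \<le> cmod (\<Sum>i<M. f i * cnj (v i))" by simp
  also have "\<dots> \<le> (\<Sum>i<M. cmod (f i) * cmod (v i))"
    by (rule order_trans[OF norm_sum]) (simp add: norm_mult)
  also have "\<dots> \<le> (\<Sum>i<M. (cmod (f i))^2 / (2*\<eta>) + \<eta> * (cmod (v i))^2 / 2)"
    by (intro sum_mono mult_le_weighted_squares \<eta>)
  also have "\<dots> = (\<Sum>i<M. (cmod (f i))^2) / (2*\<eta>) + \<eta> * S / 2"
    unfolding S_def by (simp add: sum.distrib sum_divide_distrib sum_distrib_left)
  also have "(\<Sum>i<M. (cmod (f i))^2) \<le> (\<Sum>n. (cmod (f n))^2)"
    using f by (intro sum_le_suminf) (auto simp: mem_l2seq_iff)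
  finally have "\<eta> * S \<le> (\<Sum>n. (cmod (f n))^2) / (2*\<eta>) + \<eta> * S / 2"
    using \<eta> by (simp add: divide_right_mono)
  then show ?thesis
    using \<eta> unfolding S_def[symmetric] by (simp add: field_simps power2_eq_square)
qed

lemma finite_section_solutions:
  assumes \<eta>: "\<eta> > 0" and coercive: "section_coercive K w \<eta>" and f: "f \<in> l2seq"
  obtains vs where "\<And>M n. n \<notin> {K..<M} \<Longrightarrow> vs M n = 0"
    and "\<And>M i. i \<in> {K..<M} \<Longrightarrow> Jshift w (vs M) i = f i"
    and "\<And>M P. (\<Sum>i<P. (cmod (vs M i))^2) \<le> (\<Sum>n. (cmod (f n))^2) / \<eta>^2"
proof -
  have "\<forall>M. \<exists>v. (\<forall>n. n \<notin> {K..<M} \<longrightarrow> v n = 0) \<and> (\<forall>i\<in>{K..<M}. Jshift w v i = f i)"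
    using finite_section_solvable[OF \<eta> coercive] by blast
  then have "\<exists>vs. \<forall>M. (\<forall>n. n \<notin> {K..<M} \<longrightarrow> vs M n = 0) \<and> (\<forall>i\<in>{K..<M}. Jshift w (vs M) i = f i)"
    by (rule choice)
  then obtain vs
    where vs: "\<forall>M. (\<forall>n. n \<notin> {K..<M} \<longrightarrow> vs M n = 0) \<and> (\<forall>i\<in>{K..<M}. Jshift w (vs M) i = f i)"
    by blast
  then have supp: "\<And>M n. n \<notin> {K..<M} \<Longrightarrow> vs M n = 0"
    and rows: "\<And>M i. i \<in> {K..<M} \<Longrightarrow> Jshift w (vs M) i = f i"
    by blast+
  have "(\<Sum>i<P. (cmod (vs M i))^2) \<le> (\<Sum>n. (cmod (f n))^2) / \<eta>^2" for M P
  proof -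
    have "(\<Sum>i<P. (cmod (vs M i))^2) = (\<Sum>i\<in>{..<P} \<inter> {..<M}. (cmod (vs M i))^2)"
      by (rule sum.mono_neutral_right) (use supp in auto)
    also have "\<dots> \<le> (\<Sum>i<M. (cmod (vs M i))^2)"
      by (rule sum_mono2) auto
    also have "\<dots> \<le> (\<Sum>n. (cmod (f n))^2) / \<eta>^2"
      by (rule finite_section_bound[OF \<eta> coercive f supp rows])
    finally show ?thesis .
  qed
  with supp rows show ?thesis by (rule that)
qed

text \<open>Galerkin's method: a coordinatewise limit of the finite-section solutions solves the rows
  \<open>i \<ge> K\<close>, each of which involves only three coordinates.\<close>

lemma tail_solvable_if_section_coercive:
  assumes \<eta>: "\<eta> > 0" and coercive: "section_coercive K w \<eta>"
  shows "tail_solvable K w"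
  unfolding tail_solvable_def
proof
  fix f assume f: "f \<in> l2seq"
  define C where "C = (\<Sum>n. (cmod (f n))^2) / \<eta>^2"
  obtain vs where supp: "\<And>M n. n \<notin> {K..<M} \<Longrightarrow> vs M n = 0"
    and rows: "\<And>M i. i \<in> {K..<M} \<Longrightarrow> Jshift w (vs M) i = f i"
    and bound: "\<And>M P. (\<Sum>i<P. (cmod (vs M i))^2) \<le> C"
    using finite_section_solutions[OF \<eta> coercive f] unfolding C_def by blast
  have "cmod (vs M n) \<le> sqrt C" for M n
  proof -
    have "(cmod (vs M n))^2 \<le> (\<Sum>i<Suc n. (cmod (vs M i))^2)"
      by (rule member_le_sum) auto
    then show ?thesis using bound[of M "Suc n"] by (simp add: real_le_rsqrt)
  qed
  then obtain \<sigma> u where \<sigma>: "strict_mono \<sigma>" and lim: "\<And>n. (\<lambda>k. vs (\<sigma> k) n) \<longlonglongrightarrow> u n"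
    using pointwise_bounded_convergent_subseq[of vs "\<lambda>_. sqrt C"] by blast
  have "u n = 0" if "n < K" for n
    using lim[of n] supp[of n] that by (simp add: LIMSEQ_const_iff)
  moreover have "Jshift w u i = f i" if "i \<ge> K" for i
  proof -
    have "eventually (\<lambda>k. Jshift w (vs (\<sigma> k)) i = f i) sequentially"
      unfolding eventually_sequentially
    proof (intro exI allI impI)
      fix k assume "Suc i \<le> k"
      then have "i < \<sigma> k" using seq_suble[OF \<sigma>, of k] by linarith
      then show "Jshift w (vs (\<sigma> k)) i = f i" using rows that by simp
    qed
    then have "(\<lambda>k. Jshift w (vs (\<sigma> k)) i) \<longlonglongrightarrow> f i" by (rule tendsto_eventually)
    then show ?thesis by (rule LIMSEQ_unique[OF Jshift_tendsto[OF lim]])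
  qed
  moreover have "u \<in> l2seq" using lim bound by (rule l2seq_pointwise_limit)
  ultimately show "\<exists>u\<in>l2seq. (\<forall>n<K. u n = 0) \<and> (\<forall>i\<ge>K. Jshift w u i = f i)" by blast
qed

lemma sum_Jshift_mult_cnj:
  "(\<Sum>i<M. Jshift w v i * cnj (v i)) = (\<Sum>i<M. J v i * cnj (v i)) - w * of_real (\<Sum>i<M. (cmod (v i))^2)"
proof -
  have "(\<Sum>i<M. Jshift w v i * cnj (v i)) = (\<Sum>i<M. J v i * cnj (v i)) - w * (\<Sum>i<M. v i * cnj (v i))"
    by (simp add: Jshift_def sum_subtractf sum_distrib_left algebra_simps)
  also have "(\<Sum>i<M. v i * cnj (v i)) = of_real (\<Sum>i<M. (cmod (v i))^2)"
    by (simp only: complex_norm_square of_real_sum)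
  finally show ?thesis .
qed

lemma Im_partial_form_zero:
  assumes "\<And>n. n \<ge> M \<Longrightarrow> v n = 0"
  shows "Im (\<Sum>i<M. J v i * cnj (v i)) = 0"
proof (cases M)
  case (Suc N)
  define S where "S = (\<Sum>i<M. J v i * cnj (v i))"
  have "S - cnj S = (\<Sum>i<Suc N. J v i * cnj (v i) - v i * cnj (J v i))"
    unfolding S_def Suc by (simp add: sum_subtractf cnj_sum mult.commute)
  also have "\<dots> = 0"
    unfolding jac_green using assms[of "Suc N"] Suc by simp
  finally have "S = cnj S" by simp
  then show ?thesis unfolding S_def[symmetric] by (metis cnj.sel(2) equal_neg_zero)
qed simp

lemma section_coercive_nonreal: "section_coercive 0 w \<bar>Im w\<bar>"
  unfolding section_coercive_def
proof (intro allI impI)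
  fix v :: "nat \<Rightarrow> complex" and M :: nat
  assume "\<forall>n. n < 0 \<or> M \<le> n \<longrightarrow> v n = 0"
  then have "Im (\<Sum>i<M. Jshift w v i * cnj (v i)) = - Im w * (\<Sum>i<M. (cmod (v i))^2)"
    unfolding sum_Jshift_mult_cnj using Im_partial_form_zero[of M v] by simp
  then have "\<bar>Im w\<bar> * (\<Sum>i<M. (cmod (v i))^2) = \<bar>Im (\<Sum>i<M. Jshift w v i * cnj (v i))\<bar>"
    by (simp add: abs_mult sum_nonneg)
  also have "\<dots> \<le> cmod (\<Sum>i<M. Jshift w v i * cnj (v i))" by (rule abs_Im_le_cmod)
  finally show "\<bar>Im w\<bar> * (\<Sum>i<M. (cmod (v i))^2) \<le> cmod (\<Sum>i<M. Jshift w v i * cnj (v i))" .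
qed

lemma bij_Jshift_nonreal:
  assumes "Im w \<noteq> 0"
  shows "bij_betw (Jshift w) Dom l2seq"
proof (rule bij_Jshift_if_surj)
  show "\<not> jac_eigenvalue c1 c2 w" using jac_eigenvalue_real assms by blast
  have "tail_solvable 0 w"
    using assms by (intro tail_solvable_if_section_coercive[OF _ section_coercive_nonreal]) simp
  then show "\<exists>u\<in>l2seq. \<forall>i. Jshift w u i = f i" if "f \<in> l2seq" for f
    using that by (simp add: tail_solvable_def)
qed

lemma decaying_solution:
  assumes "tail_solvable (Suc k) w"
  obtains \<psi> where "\<psi> \<in> l2seq" "\<psi> k = 1" "\<And>i. i \<ge> Suc k \<Longrightarrow> Jshift w \<psi> i = 0"
proof -
  define g where "g i = - Jshift w (unit_seq k) i" for i
  have "g i = 0" if "i \<ge> Suc (Suc k)" for i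
    using that by (cases i) (auto simp: g_def Jshift_Suc unit_seq_def)
  then have "g \<in> l2seq" by (rule l2seq_finite_support)
  then obtain \<psi>' where "\<psi>' \<in> l2seq" "\<psi>' k = 0" "\<And>i. i \<ge> Suc k \<Longrightarrow> Jshift w \<psi>' i = g i"
    using assms by (force simp: tail_solvable_def)
  moreover have "unit_seq k \<in> l2seq"
    by (rule l2seq_finite_support[of "Suc k"]) (simp add: unit_seq_def)
  ultimately show ?thesis
    by (intro that[of "\<lambda>n. unit_seq k n + \<psi>' n"] l2seq_add) (auto simp: g_def, simp add: unit_seq_def)
qed

text \<open>If \<open>\<phi>\<close> and \<open>\<psi>\<close> were linearly dependent, \<open>\<phi>\<close> would agree with \<open>\<phi> k \<cdot> \<psi>\<close> from \<open>k\<close> on and thus be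
  a square-summable eigenvector.\<close>

lemma wronskian_nonzero:
  assumes "\<not> jac_eigenvalue c1 c2 w"
    and \<phi>: "\<phi> 0 = 1" "\<And>i. Jshift w \<phi> i = 0"
    and \<psi>: "\<psi> \<in> l2seq" "\<psi> k = 1" "\<And>i. i \<ge> Suc k \<Longrightarrow> Jshift w \<psi> i = 0"
  shows "\<phi> (Suc k) - \<phi> k * \<psi> (Suc k) \<noteq> 0"
proof
  assume dependent: "\<phi> (Suc k) - \<phi> k * \<psi> (Suc k) = 0"
  have zero: "\<phi> n - \<phi> k * \<psi> n = 0" if "n \<ge> k" for n
    by (rule Jshift_zero_propagates[of k w "\<lambda>n. \<phi> n - \<phi> k * \<psi> n", OF _ _ _ that])
      (use \<phi> \<psi> dependent in simp_all)
  have "\<phi> n = \<phi> k * \<psi> n" if "n \<ge> k" for n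
    using zero[OF that] by simp
  then have "\<phi> \<in> l2seq"
    by (rule l2seq_eventually_eq[OF l2seq_cmult[OF \<psi>(1)]])
  moreover have J\<phi>: "J \<phi> = (\<lambda>n. w * \<phi> n)" using \<phi>(2) by (simp add: fun_eq_iff Jshift_def)
  ultimately have "\<phi> \<in> Dom" by (simp add: jac_dom_def l2seq_cmult)
  moreover have "\<phi> \<noteq> (\<lambda>n. 0)" using \<phi>(1) by auto
  ultimately have "jac_eigenvalue c1 c2 w"
    using J\<phi> by (auto simp: jac_eigenvalue_iff)
  with assms(1) show False ..
qed

text \<open>A solution \<open>u\<close> on the tail is matched at \<open>k\<close> and \<open>k + 1\<close>, up to a multiple of the decaying
  solution \<open>\<psi>\<close>, with a solution \<open>p + s \<phi>\<close> of the full recursion; this fixes \<open>s\<close> because the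
  Wronskian of \<open>\<phi>\<close> and \<open>\<psi>\<close> does not vanish.\<close>

lemma surj_Jshift_if_tail_solvable:
  assumes noeig: "\<not> jac_eigenvalue c1 c2 w" and tail: "tail_solvable (Suc k) w" and f: "f \<in> l2seq"
  shows "\<exists>y\<in>l2seq. \<forall>i. Jshift w y i = f i"
proof -
  obtain \<psi> where \<psi>: "\<psi> \<in> l2seq" "\<psi> k = 1" "\<And>i. i \<ge> Suc k \<Longrightarrow> Jshift w \<psi> i = 0"
    using decaying_solution[OF tail] by blast
  obtain \<phi> where \<phi>: "\<phi> 0 = 1" "\<And>i. Jshift w \<phi> i = 0"
    using Jshift_forward_solution[of 1 w "\<lambda>_. 0"] by auto
  obtain p where p: "\<And>i. Jshift w p i = f i"
    using Jshift_forward_solution[of 0 w f] by auto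
  obtain u where u: "u \<in> l2seq" "u k = 0" "\<And>i. i \<ge> Suc k \<Longrightarrow> Jshift w u i = f i"
    using tail f by (force simp: tail_solvable_def)
  define \<Delta> where "\<Delta> = \<phi> (Suc k) - \<phi> k * \<psi> (Suc k)"
  have "\<Delta> \<noteq> 0" unfolding \<Delta>_def by (rule wronskian_nonzero[OF noeig \<phi> \<psi>])
  define s where "s = (u (Suc k) + p k * \<psi> (Suc k) - p (Suc k)) / \<Delta>"
  define y where "y n = p n + s * \<phi> n" for n
  have y: "Jshift w y i = f i" for i using p \<phi> by (simp add: y_def[abs_def])
  have matched: "y n - u n - y k * \<psi> n = 0" if "n \<ge> k" for n
  proof (rule Jshift_zero_propagates[of k w "\<lambda>n. y n - u n - y k * \<psi> n", OF _ _ _ that])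
    show "Jshift w (\<lambda>n. y n - u n - y k * \<psi> n) i = 0" if "i \<ge> Suc k" for i
      using y u(3) \<psi>(3) that by simp
    show "y k - u k - y k * \<psi> k = 0" using u(2) \<psi>(2) by simp
    have "y (Suc k) - u (Suc k) - y k * \<psi> (Suc k) = p (Suc k) - u (Suc k) - p k * \<psi> (Suc k) + s * \<Delta>"
      unfolding y_def \<Delta>_def by algebra
    also have "s * \<Delta> = u (Suc k) + p k * \<psi> (Suc k) - p (Suc k)"
      using \<open>\<Delta> \<noteq> 0\<close> by (simp add: s_def)
    finally show "y (Suc k) - u (Suc k) - y k * \<psi> (Suc k) = 0" by simp
  qed
  have "y n = u n + y k * \<psi> n" if "n \<ge> k" for n
    using matched[OF that] by (simp add: algebra_simps)
  then have "y \<in> l2seq"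
    by (rule l2seq_eventually_eq[OF l2seq_add[OF u(1) l2seq_cmult[OF \<psi>(1)]]])
  with y show ?thesis by blast
qed

end

section \<open>The lower bound for the quadratic form\<close>

locale jacobi_form = jacobi +
  assumes abs_coefs_sum: "\<bar>c1\<bar> + \<bar>c2\<bar> = 1"
begin

definition abs_coef :: "nat \<Rightarrow> real" where
  "abs_coef i = \<bar>coef c1 c2 i\<bar>"

definition \<delta> :: real where
  "\<delta> = \<bar>\<bar>c1\<bar> - 1/2\<bar>"

text \<open>The surplus \<open>\<delta>\<close> of the larger coefficient over \<open>1/2\<close> is moved into \<open>\<alpha>\<close>; this makes the
  blocks \<open>[\<beta> i, lam i; lam i, \<alpha> (i + 1)]\<close> positive semidefinite while keeping \<open>\<tau>\<close> close to \<open>1/2\<close>.\<close>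

definition \<alpha> :: "nat \<Rightarrow> real" where
  "\<alpha> i = abs_coef i * real i + (if abs_coef i > 1/2 then \<delta> else 0)"

definition \<beta> :: "nat \<Rightarrow> real" where
  "\<beta> i = (if abs_coef (Suc i) > 1/2
     then (abs_coef (Suc i) * real (Suc i))^2 / (abs_coef (Suc i) * real (Suc i) + \<delta>)
     else abs_coef (Suc i) * real (Suc i))"

definition \<tau> :: "nat \<Rightarrow> real" where
  "\<tau> i = (if abs_coef (Suc i) > 1/2 then 1/2 - \<delta>^2 / (abs_coef (Suc i) * real (Suc i) + \<delta>) else 1/2)"

lemma abs_coef_Suc: "abs_coef (Suc i) = 1 - abs_coef i"
  using abs_coefs_sum by (auto simp: abs_coef_def coef_def)

lemma abs_coef_pos: "abs_coef i > 0"
  using coefs_nonzero by (auto simp: abs_coef_def coef_def)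

lemma \<delta>_eq: "\<delta> = \<bar>abs_coef i - 1/2\<bar>"
  using abs_coefs_sum by (auto simp: \<delta>_def abs_coef_def coef_def)

lemma \<delta>_nonneg: "\<delta> \<ge> 0"
  by (simp add: \<delta>_def)

lemma \<delta>_less_half: "\<delta> < 1/2"
  using abs_coef_pos[of 0] abs_coef_pos[of 1] abs_coef_Suc[of 0] \<delta>_eq[of 0] by (auto simp: abs_if)

lemma min_abs_coefs: "min \<bar>c1\<bar> \<bar>c2\<bar> = 1/2 - \<delta>"
  using abs_coefs_sum by (auto simp: \<delta>_def min_def)

lemma lam_sq: "(lam i)^2 = (abs_coef (Suc i) * real (Suc i))^2"
  by (simp add: lam_def abs_coef_def offdiag_def power_mult_distrib)

lemma \<alpha>_nonneg: "\<alpha> i \<ge> 0"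
  using abs_coef_pos[of i] \<delta>_nonneg by (simp add: \<alpha>_def)

lemma \<beta>_nonneg: "\<beta> i \<ge> 0"
  using abs_coef_pos[of "Suc i"] \<delta>_nonneg by (simp add: \<beta>_def)

lemma lam_sq_le: "(lam i)^2 \<le> \<alpha> (Suc i) * \<beta> i"
proof (cases "abs_coef (Suc i) > 1/2")
  case True
  have "abs_coef (Suc i) * real (Suc i) + \<delta> > 0"
    using abs_coef_pos[of "Suc i"] \<delta>_nonneg by (simp add: add_pos_nonneg)
  then show ?thesis using True by (simp add: \<alpha>_def \<beta>_def lam_sq)
next
  case False
  then show ?thesis by (simp add: \<alpha>_def \<beta>_def lam_sq) (simp add: power2_eq_square)
qed

lemma diagonal_split: "real (Suc i) = \<tau> i + \<alpha> i + \<beta> i"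
proof (cases "abs_coef (Suc i) > 1/2")
  case True
  define X where "X = abs_coef (Suc i) * real (Suc i)"
  have "\<not> abs_coef i > 1/2" "\<delta> = abs_coef (Suc i) - 1/2" "abs_coef i = 1 - abs_coef (Suc i)"
    using True abs_coef_Suc[of i] \<delta>_eq[of "Suc i"] by auto
  have "X + \<delta> > 0" using abs_coef_pos[of "Suc i"] \<delta>_nonneg by (simp add: X_def add_pos_nonneg)
  have "\<tau> i + \<alpha> i + \<beta> i = 1/2 + abs_coef i * real i + (X^2 / (X + \<delta>) - \<delta>^2 / (X + \<delta>))"
    using True \<open>\<not> abs_coef i > 1/2\<close> unfolding \<tau>_def \<alpha>_def \<beta>_def X_def[symmetric] by simp
  also have "X^2 / (X + \<delta>) - \<delta>^2 / (X + \<delta>) = X - \<delta>"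
  proof -
    have "X^2 - \<delta>^2 = (X - \<delta>) * (X + \<delta>)" by (simp add: power2_eq_square algebra_simps)
    then show ?thesis using \<open>X + \<delta> > 0\<close> by (simp add: diff_divide_distrib[symmetric])
  qed
  also have "1/2 + abs_coef i * real i + (X - \<delta>) = real (Suc i)"
    unfolding X_def \<open>\<delta> = abs_coef (Suc i) - 1/2\<close> \<open>abs_coef i = 1 - abs_coef (Suc i)\<close> by (simp add: algebra_simps)
  finally show ?thesis ..
next
  case False
  text \<open>If both coefficients equal \<open>1/2\<close>, then \<open>\<delta> = 0\<close>.\<close>
  have "\<alpha> i = abs_coef i * real i + \<delta>"
    using False abs_coef_Suc[of i] \<delta>_eq[of i] by (auto simp: \<alpha>_def)
  moreover have "\<delta> = abs_coef i - 1/2" using False abs_coef_Suc[of i] \<delta>_eq[of i] by auto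
  ultimately show ?thesis
    using False unfolding \<tau>_def \<beta>_def by (simp add: abs_coef_Suc algebra_simps)
qed

lemma \<tau>_le_half: "\<tau> i \<le> 1/2"
  using abs_coef_pos[of "Suc i"] \<delta>_nonneg by (simp add: \<tau>_def)

lemma \<tau>_ge: "\<tau> i \<ge> 1/2 - \<delta>"
proof (cases "abs_coef (Suc i) > 1/2 \<and> \<delta> > 0")
  case True
  have "\<delta>^2 / (abs_coef (Suc i) * real (Suc i) + \<delta>) \<le> \<delta>^2 / \<delta>"
  proof (rule divide_left_mono)
    have X: "abs_coef (Suc i) * real (Suc i) \<ge> 0" using abs_coef_pos[of "Suc i"] by simp
    then show "\<delta> \<le> abs_coef (Suc i) * real (Suc i) + \<delta>" by linarith
    show "0 < (abs_coef (Suc i) * real (Suc i) + \<delta>) * \<delta>"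
      using X True by (intro mult_pos_pos) linarith+
  qed simp
  then show ?thesis using True by (simp add: \<tau>_def power2_eq_square)
next
  case False
  then show ?thesis using \<delta>_nonneg by (auto simp: \<tau>_def)
qed

lemma \<tau>_ge_inverse: "\<tau> i \<ge> 1/2 - 1 / real (Suc i)"
proof (cases "abs_coef (Suc i) > 1/2")
  case True
  have "real (Suc i) / 2 \<le> abs_coef (Suc i) * real (Suc i) + \<delta>"
    using True \<delta>_nonneg mult_right_mono[of "1/2" "abs_coef (Suc i)" "real (Suc i)"] by linarith
  moreover have "\<delta>^2 \<le> 1/4"
    using power_mono[OF less_imp_le[OF \<delta>_less_half] \<delta>_nonneg, of 2] by (simp add: power2_eq_square)
  ultimately have "\<delta>^2 / (abs_coef (Suc i) * real (Suc i) + \<delta>) \<le> (1/4) / (real (Suc i) / 2)"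
    by (intro frac_le) auto
  also have "\<dots> \<le> 1 / real (Suc i)" by (simp add: field_simps)
  finally show ?thesis using True by (simp add: \<tau>_def)
qed (simp add: \<tau>_def)

lemma \<tau>_pos: "\<tau> i > 0"
  using \<tau>_ge[of i] \<delta>_less_half by linarith

lemma \<tau>_ge_if_large:
  assumes "\<epsilon> > 0" "1 / \<epsilon> < real (Suc n)"
  shows "1/2 - \<epsilon> \<le> \<tau> n"
proof -
  have "1 / real (Suc n) < \<epsilon>" using assms by (simp add: field_simps)
  then show ?thesis using \<tau>_ge_inverse[of n] by linarith
qed

lemma partial_form_lower_bound:
  "(\<Sum>i<Suc M. \<tau> i * (cmod (u i))^2) + \<beta> M * (cmod (u M))^2 + lam M * Re (u (Suc M) * cnj (u M))
     \<le> Re (\<Sum>i<Suc M. J u i * cnj (u i))"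
proof (induction M)
  case 0
  have "Re (J u 0 * cnj (u 0)) = real (Suc 0) * (cmod (u 0))^2 + lam 0 * Re (u (Suc 0) * cnj (u 0))"
    by (simp add: jac_0 cmod_power2 algebra_simps) (simp add: power2_eq_square)
  moreover have "real (Suc 0) * (cmod (u 0))^2
      = \<tau> 0 * (cmod (u 0))^2 + \<alpha> 0 * (cmod (u 0))^2 + \<beta> 0 * (cmod (u 0))^2"
    by (subst diagonal_split[of 0]) (simp only: distrib_right)
  moreover have "\<alpha> 0 * (cmod (u 0))^2 \<ge> 0" using \<alpha>_nonneg[of 0] by simp
  ultimately show ?case by (simp only: lessThan_Suc_eq_insert_0 lessThan_0 sum.insert) simp
next
  case (Suc M)
  have "Re (J u (Suc M) * cnj (u (Suc M))) = lam M * Re (u (Suc M) * cnj (u M))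
     + real (Suc (Suc M)) * (cmod (u (Suc M)))^2 + lam (Suc M) * Re (u (Suc (Suc M)) * cnj (u (Suc M)))"
    by (simp add: jac_Suc cmod_power2 algebra_simps) (simp add: power2_eq_square)
  moreover have "0 \<le> \<beta> M * (cmod (u M))^2 + \<alpha> (Suc M) * (cmod (u (Suc M)))^2
      + 2 * lam M * Re (u (Suc M) * cnj (u M))"
    by (rule psd_form_nonneg) (auto simp: \<alpha>_nonneg \<beta>_nonneg lam_sq_le)
  moreover have "real (Suc (Suc M)) * (cmod (u (Suc M)))^2 = \<tau> (Suc M) * (cmod (u (Suc M)))^2
      + \<alpha> (Suc M) * (cmod (u (Suc M)))^2 + \<beta> (Suc M) * (cmod (u (Suc M)))^2"
    by (subst diagonal_split[of "Suc M"]) (simp add: distrib_right)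
  ultimately show ?case using Suc.IH by simp
qed

lemma summable_\<tau>_l2seq: "u \<in> l2seq \<Longrightarrow> summable (\<lambda>n. \<tau> n * (cmod (u n))^2)"
  unfolding mem_l2seq_iff
proof (rule summable_comparison_test')
  show "norm (\<tau> n * (cmod (u n))^2) \<le> (cmod (u n))^2" for n
    using \<tau>_pos[of n] \<tau>_le_half[of n] by (simp add: abs_mult mult_left_le_one_le)
qed

lemma form_lower_bound:
  assumes u: "u \<in> Dom"
  shows "(\<Sum>n. \<tau> n * (cmod (u n))^2) \<le> Re (l2_inner (J u) u)"
proof -
  have ul: "u \<in> l2seq" "J u \<in> l2seq" using u by (auto simp: jac_dom_def)
  have "(\<lambda>N. Re (\<Sum>i<Suc N. J u i * cnj (u i))) \<longlonglongrightarrow> Re (l2_inner (J u) u)"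
    unfolding l2_inner_def using summable_mult_cnj_l2seq[OF ul(2,1)]
    by (intro tendsto_Re LIMSEQ_Suc) (simp add: summable_LIMSEQ)
  moreover have "(\<lambda>N. \<Sum>i<Suc N. \<tau> i * (cmod (u i))^2) \<longlonglongrightarrow> (\<Sum>n. \<tau> n * (cmod (u n))^2)"
    using summable_\<tau>_l2seq[OF ul(1)] by (intro LIMSEQ_Suc) (simp add: summable_LIMSEQ)
  moreover define g where "g N = cmod (u (Suc N)) * cmod (u N)" for N
  have "summable g" unfolding g_def using ul by (intro summable_norm_mult_l2seq l2seq_shift) auto
  moreover have "(\<Sum>i<Suc N. \<tau> i * (cmod (u i))^2) \<le> Re (\<Sum>i<Suc N. J u i * cnj (u i)) + real (Suc N) * g N"
    for N
  proof -
    have "\<bar>Re (u (Suc N) * cnj (u N))\<bar> \<le> g N"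
      unfolding g_def using abs_Re_le_cmod[of "u (Suc N) * cnj (u N)"] by (simp add: norm_mult)
    then have "\<bar>lam N * Re (u (Suc N) * cnj (u N))\<bar> \<le> real (Suc N) * g N"
      unfolding abs_mult using abs_lam_le[of N] abs_coefs_sum by (intro mult_mono) auto
    moreover have "0 \<le> \<beta> N * (cmod (u N))^2" using \<beta>_nonneg[of N] by simp
    ultimately show ?thesis using partial_form_lower_bound[of u N] by linarith
  qed
  ultimately show ?thesis by (rule tendsto_le_if_le_plus_harmonic)
qed

lemma no_eigenvalue_below:
  assumes "x < 1/2 - \<delta>"
  shows "\<not> jac_eigenvalue c1 c2 (of_real x)"
proof
  assume "jac_eigenvalue c1 c2 (of_real x)"
  then obtain u where u: "u \<in> Dom" "J u = (\<lambda>n. of_real x * u n)" "u \<noteq> (\<lambda>n. 0)"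
    by (auto simp: jac_eigenvalue_iff)
  have ul: "u \<in> l2seq" using u(1) by (simp add: jac_dom_def)
  have "(1/2 - \<delta>) * (\<Sum>n. (cmod (u n))^2) = (\<Sum>n. (1/2 - \<delta>) * (cmod (u n))^2)"
    using ul by (simp add: mem_l2seq_iff suminf_mult)
  also have "\<dots> \<le> (\<Sum>n. \<tau> n * (cmod (u n))^2)"
    using ul \<tau>_ge by (intro suminf_le summable_\<tau>_l2seq summable_mult mult_right_mono)
      (auto simp: mem_l2seq_iff)
  also have "\<dots> \<le> x * (\<Sum>n. (cmod (u n))^2)"
    using form_lower_bound[OF u(1)] l2_inner_eigenvector[OF ul u(2)] by simp
  finally show False
    using assms l2seq_suminf_pos[OF ul u(3)] by (simp add: mult_le_cancel_right)
qed

section \<open>Spectrum below \<open>1/2\<close>\<close>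

lemma section_coercive_real:
  assumes \<eta>: "\<And>i. i \<ge> K \<Longrightarrow> \<eta> \<le> \<tau> i - x"
  shows "section_coercive K (of_real x) \<eta>"
  unfolding section_coercive_def
proof (intro allI impI)
  fix v :: "nat \<Rightarrow> complex" and M :: nat
  assume v: "\<forall>n. n < K \<or> M \<le> n \<longrightarrow> v n = 0"
  have "\<eta> * (\<Sum>i<M. (cmod (v i))^2) \<le> (\<Sum>i<M. (\<tau> i - x) * (cmod (v i))^2)"
    unfolding sum_distrib_left
  proof (rule sum_mono)
    fix i
    show "\<eta> * (cmod (v i))^2 \<le> (\<tau> i - x) * (cmod (v i))^2"
    proof (cases "i < K")
      case False
      then show ?thesis using \<eta>[of i] by (intro mult_right_mono) auto
    qed (use v in simp)
  qed
  also have "\<dots> = (\<Sum>i<M. \<tau> i * (cmod (v i))^2) - x * (\<Sum>i<M. (cmod (v i))^2)"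
    by (simp add: sum_subtractf sum_distrib_left algebra_simps)
  also have "\<dots> \<le> Re (\<Sum>i<M. Jshift (of_real x) v i * cnj (v i))"
  proof (cases M)
    case (Suc N)
    have "0 \<le> \<beta> N * (cmod (v N))^2" using \<beta>_nonneg[of N] by simp
    moreover have "lam N * Re (v (Suc N) * cnj (v N)) = 0" using v Suc by simp
    ultimately have "(\<Sum>i<M. \<tau> i * (cmod (v i))^2) \<le> Re (\<Sum>i<M. J v i * cnj (v i))"
      using partial_form_lower_bound[of v N] unfolding Suc by linarith
    then show ?thesis unfolding sum_Jshift_mult_cnj by simp
  qed simp
  also have "\<dots> \<le> cmod (\<Sum>i<M. Jshift (of_real x) v i * cnj (v i))" by (rule complex_Re_le_cmod)
  finally show "\<eta> * (\<Sum>i<M. (cmod (v i))^2) \<le> cmod (\<Sum>i<M. Jshift (of_real x) v i * cnj (v i))" .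
qed

lemma tail_solvable_below_half:
  assumes "x < 1/2"
  obtains k where "tail_solvable (Suc k) (of_real x)"
proof -
  define \<eta> where "\<eta> = (1/2 - x) / 2"
  have "\<eta> > 0" using assms by (simp add: \<eta>_def)
  have "\<eta> \<le> \<tau> i - x" if "i \<ge> Suc (nat \<lceil>1/\<eta>\<rceil>)" for i
  proof -
    have "1 / \<eta> < real (Suc i)" using that by linarith
    moreover have "2 * \<eta> = 1/2 - x" by (simp add: \<eta>_def)
    ultimately show ?thesis using \<tau>_ge_if_large[OF \<open>\<eta> > 0\<close>, of i] by linarith
  qed
  then show ?thesis
    by (intro that tail_solvable_if_section_coercive[OF \<open>\<eta> > 0\<close>] section_coercive_real)
qed

lemma bij_Jshift_below_half:
  assumes "x < 1/2" "\<not> jac_eigenvalue c1 c2 (of_real x)"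
  shows "bij_betw (Jshift (of_real x)) Dom l2seq"
proof -
  obtain k where "tail_solvable (Suc k) (of_real x)" using tail_solvable_below_half[OF assms(1)] .
  then show ?thesis
    using assms(2) surj_Jshift_if_tail_solvable by (intro bij_Jshift_if_surj) auto
qed

lemma spectrum_below_half_subset:
  assumes "c \<le> 1/2"
  shows "jac_spectrum c1 c2 \<inter> {w. Re w < c} \<subseteq> of_real ` {x. jac_eigenvalue c1 c2 (of_real x) \<and> x < c}"
proof
  fix w assume w: "w \<in> jac_spectrum c1 c2 \<inter> {w. Re w < c}"
  then have "Im w = 0" using bij_Jshift_nonreal by (auto simp: jac_spectrum_iff)
  then have "w = of_real (Re w)" by (simp add: complex_eq_iff)
  moreover have "jac_eigenvalue c1 c2 (of_real (Re w))"
    using w assms bij_Jshift_below_half[of "Re w"] \<open>w = of_real (Re w)\<close>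
    by (auto simp: jac_spectrum_iff)
  ultimately show "w \<in> of_real ` {x. jac_eigenvalue c1 c2 (of_real x) \<and> x < c}"
    using w by auto
qed

lemma spectrum_below_min_abs_coefs_empty:
  "jac_spectrum c1 c2 \<inter> complex_of_real ` {..< min \<bar>c1\<bar> \<bar>c2\<bar>} = {}"
  using spectrum_below_half_subset[of "1/2 - \<delta>"] no_eigenvalue_below \<delta>_nonneg
  unfolding min_abs_coefs by force

lemma form_ge_if_head_vanishes:
  assumes u: "u \<in> Dom" and "\<epsilon> > 0" and head: "\<And>n. n < nat \<lfloor>1/\<epsilon>\<rfloor> \<Longrightarrow> u n = 0"
  shows "(1/2 - \<epsilon>) * (\<Sum>n. (cmod (u n))^2) \<le> Re (l2_inner (J u) u)"
proof -
  have ul: "u \<in> l2seq" using u by (simp add: jac_dom_def)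
  have "(1/2 - \<epsilon>) * (cmod (u n))^2 \<le> \<tau> n * (cmod (u n))^2" for n
  proof (cases "n < nat \<lfloor>1/\<epsilon>\<rfloor>")
    case False
    then have "1 / \<epsilon> < real (Suc n)" by linarith
    then show ?thesis using \<tau>_ge_if_large[OF \<open>\<epsilon> > 0\<close>] by (simp add: mult_right_mono)
  qed (simp add: head)
  then have "(\<Sum>n. (1/2 - \<epsilon>) * (cmod (u n))^2) \<le> (\<Sum>n. \<tau> n * (cmod (u n))^2)"
    using ul by (intro suminf_le summable_\<tau>_l2seq summable_mult) (auto simp: mem_l2seq_iff)
  then show ?thesis
    using form_lower_bound[OF u] ul by (simp add: mem_l2seq_iff suminf_mult)
qed

text \<open>Eigenvectors for more than \<open>N = \<lfloor>1/\<epsilon>\<rfloor>\<close> eigenvalues below \<open>1/2 - \<epsilon>\<close> span a vector vanishing on the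
  first \<open>N\<close> coordinates whose Rayleigh quotient is below \<open>1/2 - \<epsilon>\<close>, while \<open>\<tau> n \<ge> 1/2 - \<epsilon>\<close> for
  \<open>n \<ge> N\<close>.\<close>

lemma card_eigenvalues_below_le:
  assumes \<epsilon>: "\<epsilon> > 0" and F: "finite F" "F \<subseteq> {x. jac_eigenvalue c1 c2 (of_real x) \<and> x < 1/2 - \<epsilon>}"
  shows "card F \<le> nat \<lfloor>1/\<epsilon>\<rfloor>"
proof (rule ccontr)
  assume "\<not> card F \<le> nat \<lfloor>1/\<epsilon>\<rfloor>"
  then have "card {..<nat \<lfloor>1/\<epsilon>\<rfloor>} < card F" by simp
  have "\<forall>x\<in>F. \<exists>u. u \<in> Dom \<and> J u = (\<lambda>n. of_real x * u n) \<and> u \<noteq> (\<lambda>n. 0)"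
    using F(2) by (auto simp: jac_eigenvalue_iff)
  then obtain e where e: "\<And>x. x \<in> F \<Longrightarrow> e x \<in> Dom" "\<And>x. x \<in> F \<Longrightarrow> J (e x) = (\<lambda>n. of_real x * e x n)"
    "\<And>x. x \<in> F \<Longrightarrow> e x \<noteq> (\<lambda>n. 0)"
    by metis
  obtain b where b: "\<exists>x\<in>F. b x \<noteq> 0" "\<forall>n\<in>{..<nat \<lfloor>1/\<epsilon>\<rfloor>}. (\<Sum>x\<in>F. b x * e x n) = 0"
    using homogeneous_system_nontrivial_solution[of "{..<nat \<lfloor>1/\<epsilon>\<rfloor>}" F "\<lambda>x n. e x n"]
      F(1) \<open>card {..<nat \<lfloor>1/\<epsilon>\<rfloor>} < card F\<close> by auto
  define q where "q x = (\<Sum>n. (cmod (e x n))^2)" for x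
  have q: "q x > 0" if "x \<in> F" for x
    unfolding q_def using e(1,3)[OF that] by (intro l2seq_suminf_pos) (simp_all add: jac_dom_def)
  define u where "u = (\<lambda>n. \<Sum>x\<in>F. b x * e x n)"
  note u = eigenvector_combination[OF F(1) e(1,2), of b, folded q_def u_def]
  have "(1/2 - \<epsilon>) * (\<Sum>n. (cmod (u n))^2) \<le> Re (l2_inner (J u) u)"
    by (rule form_ge_if_head_vanishes[OF u(1) \<epsilon>]) (use b(2) in \<open>auto simp: u_def\<close>)
  then have "(1/2 - \<epsilon>) * (\<Sum>x\<in>F. (cmod (b x))^2 * q x) \<le> (\<Sum>x\<in>F. x * (cmod (b x))^2 * q x)"
    using u(2,3) by (simp add: u_def)
  moreover have "(\<Sum>x\<in>F. x * (cmod (b x))^2 * q x) < (\<Sum>x\<in>F. (1/2 - \<epsilon>) * ((cmod (b x))^2 * q x))"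
  proof (rule sum_strict_mono_ex1[OF F(1)])
    show "\<forall>x\<in>F. x * (cmod (b x))^2 * q x \<le> (1/2 - \<epsilon>) * ((cmod (b x))^2 * q x)"
      using F(2) q by (auto intro!: mult_right_mono simp: mult.assoc less_imp_le)
    show "\<exists>x\<in>F. x * (cmod (b x))^2 * q x < (1/2 - \<epsilon>) * ((cmod (b x))^2 * q x)"
      using F(2) q b(1) by (auto intro!: mult_strict_right_mono simp: mult.assoc)
  qed
  ultimately show False by (simp add: sum_distrib_left)
qed

lemma eigenvalues_below_finite:
  assumes "\<epsilon> > 0"
  shows "finite {x. jac_eigenvalue c1 c2 (of_real x) \<and> x < 1/2 - \<epsilon>}"
proof (rule ccontr)
  assume "infinite {x. jac_eigenvalue c1 c2 (of_real x) \<and> x < 1/2 - \<epsilon>}"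
  then obtain F where "finite F" "card F = Suc (nat \<lfloor>1/\<epsilon>\<rfloor>)"
    "F \<subseteq> {x. jac_eigenvalue c1 c2 (of_real x) \<and> x < 1/2 - \<epsilon>}"
    using infinite_arbitrarily_large by blast
  then show False using card_eigenvalues_below_le[OF assms] by fastforce
qed

lemma card_eigenvalues_below_le_inverse:
  assumes "\<epsilon> > 0"
  shows "real (card {x. jac_eigenvalue c1 c2 (of_real x) \<and> x < 1/2 - \<epsilon>}) \<le> 1 / \<epsilon>"
proof -
  have "card {x. jac_eigenvalue c1 c2 (of_real x) \<and> x < 1/2 - \<epsilon>} \<le> nat \<lfloor>1/\<epsilon>\<rfloor>"
    using card_eigenvalues_below_le[OF assms eigenvalues_below_finite[OF assms]] by simp
  moreover have "real (nat \<lfloor>1/\<epsilon>\<rfloor>) \<le> 1/\<epsilon>" using assms by (simp add: of_nat_nat)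
  ultimately show ?thesis by (meson of_nat_le_iff order_trans)
qed

lemma spectrum_below_half_discrete:
  assumes "z \<in> jac_spectrum c1 c2" "Re z < 1/2"
  shows "z \<in> jac_disc_spectrum c1 c2"
proof -
  define \<epsilon> where "\<epsilon> = (1/2 - Re z) / 2"
  have "\<epsilon> > 0" using assms(2) by (simp add: \<epsilon>_def)
  have "2 * \<epsilon> = 1/2 - Re z" by (simp add: \<epsilon>_def)
  then have "Re z < 1/2 - \<epsilon>" using assms(2) by linarith
  have "finite ({w. Re w < 1/2 - \<epsilon>} \<inter> jac_spectrum c1 c2)"
    using spectrum_below_half_subset[of "1/2 - \<epsilon>"] eigenvalues_below_finite[OF \<open>\<epsilon> > 0\<close>] \<open>\<epsilon> > 0\<close>
    by (auto intro: finite_subset)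
  then have "\<not> z islimpt jac_spectrum c1 c2"
    using \<open>Re z < 1/2 - \<epsilon>\<close> open_halfspace_Re_lt by (auto simp: islimpt_eq_acc_point)
  moreover have "jac_eigenvalue c1 c2 z"
    using spectrum_below_half_subset[of "1/2"] assms by auto
  ultimately show ?thesis
    using assms(1) jac_eigenspace_fin_dim by (simp add: jac_disc_spectrum_def)
qed

end

theorem theorem4:
  fixes c1 c2 :: real
  assumes "\<bar>c1\<bar> + \<bar>c2\<bar> = 1" and "c1 * c2 \<noteq> 0" and "\<bar>c1\<bar> \<noteq> \<bar>c2\<bar>"
  shows "jac_spectrum c1 c2 \<inter> complex_of_real ` {..< min \<bar>c1\<bar> \<bar>c2\<bar>} = {} \<and>
     jac_spectrum c1 c2 \<inter> complex_of_real ` {min \<bar>c1\<bar> \<bar>c2\<bar> ..< 1/2}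
           \<subseteq> jac_disc_spectrum c1 c2 \<and>
     (\<forall>\<epsilon>::real. \<epsilon> > 0 \<longrightarrow>
           finite {x::real. jac_eigenvalue c1 c2 (complex_of_real x) \<and> x < 1/2 - \<epsilon>} \<and>
           real (card {x::real. jac_eigenvalue c1 c2 (complex_of_real x) \<and> x < 1/2 - \<epsilon>})
             \<le> 1 / \<epsilon>)"
proof -
  interpret jacobi_form c1 c2
    using assms(1,2) by unfold_locales
  show ?thesis
    using spectrum_below_min_abs_coefs_empty spectrum_below_half_discrete
      eigenvalues_below_finite card_eigenvalues_below_le_inverse
    by auto
qed
end
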